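(* Let $\phi\in J_{k_1,m_1}(\mathcal O_K)$ and $\psi\in J_{k_2,m_2}(\mathcal O_K)$. Then (i) $m_1\phi\,\psi_{(2)}-m_2\psi\,\phi_{(2)}$ is a Hermitian Jacobi form of weight $k_1+k_2+1$ and index $m_1+m_2$, i.e. lies in $J_{k_1+k_2+1,m_1+m_2}(\mathcal O_K)$; (ii) $\bigl(m_1\phi\,\psi_{(1)}-m_2\psi\,\phi_{(1)}\bigr)^2+m_1\phi^2\bigl(\psi_{(1)}^2-\psi\,\psi_{(1,1)}\bigr)+m_2\psi^2\bigl(\phi_{(1)}^2-\phi\,\phi_{(1,1)}\bigr)$ lies in $J_{2(k_1+k_2+1),\,2(m_1+m_2)}(\mathcal O_K)$.
   Context: Notation: $\mathcal H$ is the upper half plane, $e(x)=e^{2\pi i x}$, $K=\mathbb Q(i)$, $\mathcal O_K=\mathbb Z[i]$, $\mathcal O_K^\times=\{\pm1,\pm i\}$, $N(x)=x\bar x$, $\mathcal O_K^\sharp=\frac i2\mathcal O_K$. For integers $k,m$, $\epsilon\in\mathcal O_K^\times$, $M=\begin{pmatrix}a&b\\c&d\end{pmatrix}\in SL(2,\mathbb Z)$ and $\phi$ a function on $\mathcal H\times\mathbb C^2$: $(\phi|_{k,m}\epsilon M)(\tau,z_1,z_2)=\epsilon^{-k}(c\tau+d)^{-k}e^{-2\pi i m c z_1z_2/(c\tau+d)}\phi\bigl(M\tau,\tfrac{\epsilon z_1}{c\tau+d},\tfrac{\bar\epsilon z_2}{c\tau+d}\bigr)$, $M\tau=\frac{a\tau+b}{c\tau+d}$;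 for $\lambda,\mu\in\mathcal O_K$, $(\phi|_m[\lambda,\mu])(\tau,z_1,z_2)=e^{2\pi i m(N(\lambda)\tau+\bar\lambda z_1+\lambda z_2)}\phi(\tau,z_1+\lambda\tau+\mu,z_2+\bar\lambda\tau+\bar\mu)$. For positive integers $k,m$, $J_{k,m}(\mathcal O_K)$ is the space of holomorphic $\phi:\mathcal H\times\mathbb C^2\to\mathbb C$ with $\phi|_{k,m}\epsilon M=\phi$ for all $\epsilon\in\mathcal O_K^\times$, $M\in SL(2,\mathbb Z)$, $\phi|_m[\lambda,\mu]=\phi$ for all $\lambda,\mu\in\mathcal O_K$, and with a Fourier expansion $\phi=\sum_{n\ge0}\sum_{r\in\mathcal O_K^\sharp,\ nm\ge N(r)}c_\phi(n,r)\,e(n\tau+rz_1+\bar rz_2)$. For a function $\phi$ on $\mathcal H\times\mathbb C^2$, $\phi_{(j)}=\partial\phi/\partial z_j$ ($j=1,2$) and $\phi_{(r,s)}=\partial^2\phi/\partial z_s\partial z_r$. *)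

theory Defs
  imports "HOL-Analysis.Analysis"
begin

definition ee :: "complex \<Rightarrow> complex" where
  "ee x = exp (2 * complex_of_real pi * \<i> * x)"

definition gauss_ints :: "complex set" where
  "gauss_ints = {of_int a + \<i> * of_int b | a b. True}"

definition gauss_units :: "complex set" where
  "gauss_units = {1, -1, \<i>, -\<i>}"

definition gauss_dual :: "complex set" where
  "gauss_dual = {(\<i> / 2) * x | x. x \<in> gauss_ints}"

definition normK :: "complex \<Rightarrow> complex" where
  "normK x = x * cnj x"

definition holo3 :: "(complex \<Rightarrow> complex \<Rightarrow> complex \<Rightarrow> complex) \<Rightarrow> bool" where
  "holo3 f \<longleftrightarrow> (\<forall>\<tau> z1 z2. Im \<tau> > 0 \<longrightarrow>
     (\<exists>A B C. ((\<lambda>(t, x, y). f t x y) has_derivative (\<lambda>(u, v, w). A * u + B * v + C * w))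
        (at (\<tau>, z1, z2))))"

definition slash :: "nat \<Rightarrow> nat \<Rightarrow> complex \<Rightarrow> int \<Rightarrow> int \<Rightarrow> int \<Rightarrow> int \<Rightarrow>
    (complex \<Rightarrow> complex \<Rightarrow> complex \<Rightarrow> complex) \<Rightarrow> complex \<Rightarrow> complex \<Rightarrow> complex \<Rightarrow> complex" where
  "slash k m \<epsilon> a b c d \<phi> \<tau> z1 z2 =
     inverse (\<epsilon> ^ k) * inverse ((of_int c * \<tau> + of_int d) ^ k)
     * exp (- 2 * complex_of_real pi * \<i> * of_nat m * of_int c * z1 * z2 / (of_int c * \<tau> + of_int d))
     * \<phi> ((of_int a * \<tau> + of_int b) / (of_int c * \<tau> + of_int d))
          (\<epsilon> * z1 / (of_int c * \<tau> + of_int d)) (cnj \<epsilon> * z2 / (of_int c * \<tau> + of_int d))"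

definition heis :: "nat \<Rightarrow> complex \<Rightarrow> complex \<Rightarrow>
    (complex \<Rightarrow> complex \<Rightarrow> complex \<Rightarrow> complex) \<Rightarrow> complex \<Rightarrow> complex \<Rightarrow> complex \<Rightarrow> complex" where
  "heis m l \<mu> \<phi> \<tau> z1 z2 =
     exp (2 * complex_of_real pi * \<i> * of_nat m * (normK l * \<tau> + cnj l * z1 + l * z2))
     * \<phi> \<tau> (z1 + l * \<tau> + \<mu>) (z2 + cnj l * \<tau> + cnj \<mu>)"

text \<open>J_{k,m}(O_K): Hermitian Jacobi forms of weight k and index m (functions are
  considered on H x C^2, i.e. for Im tau > 0).\<close>
definition HJF :: "nat \<Rightarrow> nat \<Rightarrow> (complex \<Rightarrow> complex \<Rightarrow> complex \<Rightarrow> complex) \<Rightarrow> bool" where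
  "HJF k m \<phi> \<longleftrightarrow>
     holo3 \<phi>
   \<and> (\<forall>\<epsilon>\<in>gauss_units. \<forall>a b c d. a * d - b * c = 1 \<longrightarrow>
        (\<forall>\<tau> z1 z2. Im \<tau> > 0 \<longrightarrow> slash k m \<epsilon> a b c d \<phi> \<tau> z1 z2 = \<phi> \<tau> z1 z2))
   \<and> (\<forall>l\<in>gauss_ints. \<forall>\<mu>\<in>gauss_ints.
        (\<forall>\<tau> z1 z2. Im \<tau> > 0 \<longrightarrow> heis m l \<mu> \<phi> \<tau> z1 z2 = \<phi> \<tau> z1 z2))
   \<and> (\<exists>cf :: nat \<Rightarrow> complex \<Rightarrow> complex. \<forall>\<tau> z1 z2. Im \<tau> > 0 \<longrightarrow>
        ((\<lambda>(n, r). cf n r * ee (of_nat n * \<tau> + r * z1 + cnj r * z2)) has_sum \<phi> \<tau> z1 z2)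
          {(n, r). r \<in> gauss_dual \<and> (cmod r)\<^sup>2 \<le> real (n * m)})"

definition pd1 :: "(complex \<Rightarrow> complex \<Rightarrow> complex \<Rightarrow> complex) \<Rightarrow> complex \<Rightarrow> complex \<Rightarrow> complex \<Rightarrow> complex" where
  "pd1 \<phi> \<tau> z1 z2 = deriv (\<lambda>w. \<phi> \<tau> w z2) z1"

definition pd2 :: "(complex \<Rightarrow> complex \<Rightarrow> complex \<Rightarrow> complex) \<Rightarrow> complex \<Rightarrow> complex \<Rightarrow> complex \<Rightarrow> complex" where
  "pd2 \<phi> \<tau> z1 z2 = deriv (\<lambda>w. \<phi> \<tau> z1 w) z2"

end

theory Submission
  imports Defs
begin

text \<open>
  Membership in J_{k,m}(O_K) consists of a Fourier expansion supported on
  {(n, r). r \<in> O_K^#, |r|^2 \<le> nm}, invariance under the slash action, and invariance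
  under the Heisenberg action; the three requirements are handled separately.
  (1) An absolutely convergent series of terms c(n,r) e(n\<tau> + r z1 + cnj r z2) on the upper
      half plane converges with an exponential margin in n + |r|, so it may be differentiated
      termwise: the sum is holomorphic and its z-derivatives have expansions on the same
      support.  Cauchy products and the inequality |r1 + r2|^2 \<le> (n1 + n2)(m1 + m2) show that
      expansions of index m1 and m2 multiply to one of index m1 + m2.
  (2) Both actions are transformation laws \<phi>(\<tau>', p1 z1 + q1, p2 z2 + q2) =
      C e^{m Q(z1,z2)} \<phi>(\<tau>, z1, z2) with Q affine in each variable.  Differentiating such a
      law, the inhomogeneous terms cancel in the two combinations, which therefore transform
      with the factor C1 C2 e^{(m1+m2)Q} / p2, resp. (C1 C2 / p1)^2 e^{2(m1+m2)Q}.
  (3) For the slash and Heisenberg actions these factors are exactly the automorphy factors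
      of the new weight and index.
\<close>

section \<open>Convergence of Hermitian Jacobi Fourier series\<close>

lemma ee_add: "ee (x + y) = ee x * ee y"
  unfolding ee_def by (simp add: distrib_left exp_add)

lemma norm_ee: "norm (ee x) = exp (- 2 * pi * Im x)"
  unfolding ee_def by simp

definition fourier_term :: "(nat \<Rightarrow> complex \<Rightarrow> complex) \<Rightarrow> complex \<Rightarrow> complex \<Rightarrow> complex
    \<Rightarrow> nat \<times> complex \<Rightarrow> complex" where
  "fourier_term c \<tau> z1 z2 = (\<lambda>(n, r). c n r * ee (of_nat n * \<tau> + r * z1 + cnj r * z2))"

lemma fourier_term_shift:
  "fourier_term c (\<tau> + h0) (z1 + h1) (z2 + h2) x
     = fourier_term c \<tau> z1 z2 x * ee (of_nat (fst x) * h0 + snd x * h1 + cnj (snd x) * h2)"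
proof -
  obtain n r where x: "x = (n, r)" by (cases x)
  have "of_nat n * (\<tau> + h0) + r * (z1 + h1) + cnj r * (z2 + h2) =
        (of_nat n * \<tau> + r * z1 + cnj r * z2) + (of_nat n * h0 + r * h1 + cnj r * h2)"
    by (simp add: algebra_simps)
  then show ?thesis
    unfolding fourier_term_def x prod.case fst_conv snd_conv
    by (simp add: ee_add[of "of_nat n * \<tau> + r * z1 + cnj r * z2"])
qed

definition freq_weight :: "nat \<times> complex \<Rightarrow> real" where
  "freq_weight x = real (fst x) + cmod (snd x)"

lemma freq_weight_nonneg: "freq_weight x \<ge> 0"
  unfolding freq_weight_def by simp

definition coeff_tau :: "(nat \<Rightarrow> complex \<Rightarrow> complex) \<Rightarrow> nat \<Rightarrow> complex \<Rightarrow> complex" where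
  "coeff_tau c n r = c n r * (2 * of_real pi * \<i> * of_nat n)"

definition coeff_z1 :: "(nat \<Rightarrow> complex \<Rightarrow> complex) \<Rightarrow> nat \<Rightarrow> complex \<Rightarrow> complex" where
  "coeff_z1 c n r = c n r * (2 * of_real pi * \<i> * r)"

definition coeff_z2 :: "(nat \<Rightarrow> complex \<Rightarrow> complex) \<Rightarrow> nat \<Rightarrow> complex \<Rightarrow> complex" where
  "coeff_z2 c n r = c n r * (2 * of_real pi * \<i> * cnj r)"

lemma fourier_term_coeff_tau:
  "fourier_term (coeff_tau c) \<tau> z1 z2 x = fourier_term c \<tau> z1 z2 x * (2 * of_real pi * \<i> * of_nat (fst x))"
  by (cases x) (simp add: fourier_term_def coeff_tau_def mult_ac)

lemma fourier_term_coeff_z1: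
  "fourier_term (coeff_z1 c) \<tau> z1 z2 x = fourier_term c \<tau> z1 z2 x * (2 * of_real pi * \<i> * snd x)"
  by (cases x) (simp add: fourier_term_def coeff_z1_def mult_ac)

lemma fourier_term_coeff_z2:
  "fourier_term (coeff_z2 c) \<tau> z1 z2 x = fourier_term c \<tau> z1 z2 x * (2 * of_real pi * \<i> * cnj (snd x))"
  by (cases x) (simp add: fourier_term_def coeff_z2_def mult_ac)

lemma exp_remainder_bound:
  fixes w :: complex
  shows "norm (exp w - 1 - w) \<le> (norm w)\<^sup>2 * exp (norm w)"
proof -
  have "(\<lambda>n. w ^ n /\<^sub>R fact n) sums exp w" by (rule exp_converges)
  then have "(\<lambda>n. w ^ (n + 2) /\<^sub>R fact (n + 2)) sums (exp w - (\<Sum>i<2. w ^ i /\<^sub>R fact i))"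
    by (subst sums_iff_shift) simp
  then have tail: "(\<lambda>n. w ^ (n + 2) /\<^sub>R fact (n + 2)) sums (exp w - 1 - w)"
    by (simp add: numeral_2_eq_2 diff_diff_eq)
  have major: "(\<lambda>n. (norm w)\<^sup>2 * (norm w ^ n /\<^sub>R fact n)) sums ((norm w)\<^sup>2 * exp (norm w))"
    by (intro sums_mult exp_converges)
  have termwise: "norm (w ^ (n + 2) /\<^sub>R fact (n + 2)) \<le> (norm w)\<^sup>2 * (norm w ^ n /\<^sub>R fact n)" for n
  proof -
    have "fact n \<le> (fact (n + 2) :: real)" by (intro fact_mono) auto
    then have "norm w ^ (n + 2) / fact (n + 2) \<le> norm w ^ (n + 2) / fact n"
      by (intro divide_left_mono) auto
    moreover have "norm (w ^ (n + 2) /\<^sub>R fact (n + 2)) = norm w ^ (n + 2) / fact (n + 2)"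
      by (simp add: norm_power norm_mult divide_inverse)
    moreover have "norm w ^ (n + 2) / fact n = (norm w)\<^sup>2 * (norm w ^ n /\<^sub>R fact n)"
      by (simp add: power_add divide_inverse mult_ac power2_eq_square)
    ultimately show ?thesis by simp
  qed
  have "norm (exp w - 1 - w) \<le> (\<Sum>n. (norm w)\<^sup>2 * (norm w ^ n /\<^sub>R fact n))"
    using tail major termwise
    by (metis (no_types, lifting) norm_suminf_le sums_summable sums_unique)
  with major show ?thesis by (simp add: sums_iff)
qed

definition exp_dominated :: "(nat \<Rightarrow> complex \<Rightarrow> complex) \<Rightarrow> (nat \<times> complex) set \<Rightarrow> bool" where
  "exp_dominated c S \<longleftrightarrow> (\<forall>\<tau> z1 z2. Im \<tau> > 0 \<longrightarrow>
     (\<exists>\<epsilon>>0. (\<lambda>x. norm (fourier_term c \<tau> z1 z2 x) * exp (\<epsilon> * freq_weight x)) summable_on S))"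

text \<open>exp (\<pi> t (n + |r|)) is dominated by the sum of the four weights |e(n\<tau>' + r z1')| / |e(n\<tau> + r z1)|
  for \<tau>' = \<tau> - i t and z1' = z1 \<plusminus> t, z1 \<plusminus> i t.\<close>
lemma exp_freq_bound:
  fixes n t :: real and r :: complex
  assumes "n \<ge> 0" "t > 0"
  shows "exp (pi * t * (n + cmod r)) \<le>
     exp (2*pi*n*t - 2*pi*t*Im r) + exp (2*pi*n*t + 2*pi*t*Im r)
   + exp (2*pi*n*t - 2*pi*t*Re r) + exp (2*pi*n*t + 2*pi*t*Re r)"
proof -
  define M where "M = max \<bar>Re r\<bar> \<bar>Im r\<bar>"
  have "cmod r \<le> 2 * M" using cmod_le[of r] unfolding M_def by linarith
  then have r_part: "pi * t * cmod r \<le> pi * t * (2 * M)"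
    using assms by (intro mult_left_mono) auto
  have n_part: "0 \<le> pi * t * n" using assms by simp
  have "pi * t * (n + cmod r) \<le> 2*pi*n*t + 2*pi*t*M"
  proof -
    have e: "pi * t * (n + cmod r) = pi * t * n + pi * t * cmod r"
      "2*pi*n*t = 2 * (pi * t * n)" "2*pi*t*M = pi * t * (2 * M)"
      by (simp_all add: distrib_left)
    show ?thesis unfolding e using r_part n_part by linarith
  qed
  then have le: "exp (pi * t * (n + cmod r)) \<le> exp (2*pi*n*t + 2*pi*t*M)" by simp
  have "M = - Im r \<or> M = Im r \<or> M = - Re r \<or> M = Re r" unfolding M_def by linarith
  then have "exp (2*pi*n*t + 2*pi*t*M) \<in> {exp (2*pi*n*t - 2*pi*t*Im r), exp (2*pi*n*t + 2*pi*t*Im r),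
                exp (2*pi*n*t - 2*pi*t*Re r), exp (2*pi*n*t + 2*pi*t*Re r)}"
    by auto
  moreover have "0 < exp x" for x :: real by simp
  ultimately show ?thesis using le
    by (smt (verit, best) empty_iff insert_iff)
qed

text \<open>Summability on the whole upper half plane already gives the exponential margin: compare
  with the series at four shifted points.\<close>
lemma exp_dominated_if_summable:
  assumes summable: "\<And>\<tau> z1 z2. Im \<tau> > 0 \<Longrightarrow> fourier_term c \<tau> z1 z2 summable_on S"
  shows "exp_dominated c S"
  unfolding exp_dominated_def
proof (intro allI impI)
  fix \<tau> z1 z2 :: complex assume tau: "Im \<tau> > 0"
  define t where "t = Im \<tau> / 2"
  have t: "t > 0" using tau unfolding t_def by simp
  define g where "g w x = norm (fourier_term c (\<tau> + (- (\<i> * of_real t))) (z1 + w) (z2 + 0) x)" for w x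
  have g_summable: "g w summable_on S" for w
  proof -
    have "Im (\<tau> + (- (\<i> * of_real t))) > 0" using tau unfolding t_def by simp
    then show ?thesis
      unfolding g_def summable_on_iff_abs_summable_on_complex[symmetric] by (rule summable)
  qed
  have g_eq: "g w x = norm (fourier_term c \<tau> z1 z2 x) * exp (2*pi*real (fst x)*t - 2*pi*Im (snd x * w))"
    for w x
    unfolding g_def fourier_term_shift norm_mult norm_ee by (simp add: algebra_simps)
  have bound: "norm (fourier_term c \<tau> z1 z2 x) * exp ((pi * t) * freq_weight x) \<le>
      g (of_real t) x + g (- of_real t) x + g (\<i> * of_real t) x + g (- (\<i> * of_real t)) x" for x
  proof -
    let ?n = "real (fst x)" and ?r = "snd x"
    have "exp (pi * t * (?n + cmod ?r)) \<le>
       exp (2*pi*?n*t - 2*pi*t*Im ?r) + exp (2*pi*?n*t + 2*pi*t*Im ?r)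
     + exp (2*pi*?n*t - 2*pi*t*Re ?r) + exp (2*pi*?n*t + 2*pi*t*Re ?r)"
      by (rule exp_freq_bound) (use t in auto)
    then have "norm (fourier_term c \<tau> z1 z2 x) * exp ((pi * t) * freq_weight x)
      \<le> norm (fourier_term c \<tau> z1 z2 x) *
        (exp (2*pi*?n*t - 2*pi*t*Im ?r) + exp (2*pi*?n*t + 2*pi*t*Im ?r)
       + exp (2*pi*?n*t - 2*pi*t*Re ?r) + exp (2*pi*?n*t + 2*pi*t*Re ?r))"
      unfolding freq_weight_def by (intro mult_left_mono) auto
    also have "\<dots> = g (of_real t) x + g (- of_real t) x + g (\<i> * of_real t) x + g (- (\<i> * of_real t)) x"
      unfolding g_eq by (simp add: algebra_simps)
    finally show ?thesis .
  qed
  have "(\<lambda>x. g (of_real t) x + g (- of_real t) x + g (\<i> * of_real t) x + g (- (\<i> * of_real t)) x)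
          summable_on S"
    by (intro summable_on_add g_summable)
  then have "(\<lambda>x. norm (fourier_term c \<tau> z1 z2 x) * exp ((pi * t) * freq_weight x)) summable_on S"
    by (rule summable_on_comparison_test) (use bound in auto)
  moreover have "pi * t > 0" using t by simp
  ultimately show "\<exists>\<epsilon>>0. (\<lambda>x. norm (fourier_term c \<tau> z1 z2 x) * exp (\<epsilon> * freq_weight x)) summable_on S"
    by blast
qed

lemma weight_summable:
  fixes a K :: "'a \<Rightarrow> real"
  assumes "(\<lambda>x. a x * exp (\<epsilon> * K x)) summable_on S" "\<epsilon> > 0" "\<And>x. a x \<ge> 0" "\<And>x. K x \<ge> 0"
  shows "(\<lambda>x. a x * K x * exp ((\<epsilon>/2) * K x)) summable_on S"
proof -
  have major: "(\<lambda>x. (2/\<epsilon>) * (a x * exp (\<epsilon> * K x))) summable_on S"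
    using assms(1) by (rule summable_on_cmult_right)
  have "a x * K x * exp ((\<epsilon>/2) * K x) \<le> (2/\<epsilon>) * (a x * exp (\<epsilon> * K x))" for x
  proof -
    have "1 + (\<epsilon>/2) * K x \<le> exp ((\<epsilon>/2) * K x)" by (rule exp_ge_add_one_self)
    then have "K x \<le> (2/\<epsilon>) * exp ((\<epsilon>/2) * K x)" using assms(2) by (simp add: field_simps)
    then have "K x * exp ((\<epsilon>/2) * K x) \<le> (2/\<epsilon>) * exp ((\<epsilon>/2) * K x) * exp ((\<epsilon>/2) * K x)"
      by (intro mult_right_mono) auto
    also have "\<dots> = (2/\<epsilon>) * exp (\<epsilon> * K x)" by (simp add: mult.assoc exp_add[symmetric])
    finally have "a x * (K x * exp ((\<epsilon>/2) * K x)) \<le> a x * ((2/\<epsilon>) * exp (\<epsilon> * K x))"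
      using assms(3) by (intro mult_left_mono) auto
    then show ?thesis by (simp add: mult_ac)
  qed
  then show ?thesis
    by (intro summable_on_comparison_test[OF major]) (use assms in auto)
qed

lemma exp_dominated_summable:
  assumes "exp_dominated c S" "Im \<tau> > 0"
  shows "fourier_term c \<tau> z1 z2 summable_on S"
proof -
  obtain \<epsilon> where \<epsilon>: "\<epsilon> > 0"
    and major: "(\<lambda>x. norm (fourier_term c \<tau> z1 z2 x) * exp (\<epsilon> * freq_weight x)) summable_on S"
    using assms unfolding exp_dominated_def by blast
  have "(\<lambda>x. norm (fourier_term c \<tau> z1 z2 x)) summable_on S"
  proof (rule summable_on_comparison_test[OF major])
    fix x
    have "1 \<le> exp (\<epsilon> * freq_weight x)" using \<epsilon> freq_weight_nonneg[of x] by simp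
    then show "norm (fourier_term c \<tau> z1 z2 x)
                 \<le> norm (fourier_term c \<tau> z1 z2 x) * exp (\<epsilon> * freq_weight x)"
      by (metis mult.right_neutral mult_left_mono norm_ge_zero)
  qed simp
  then show ?thesis using summable_on_iff_abs_summable_on_complex by blast
qed

lemma exp_dominated_multiplier:
  assumes "exp_dominated c S"
    and multiplier: "\<And>\<tau> z1 z2 x. norm (fourier_term c' \<tau> z1 z2 x)
                                 \<le> 2 * pi * freq_weight x * norm (fourier_term c \<tau> z1 z2 x)"
  shows "exp_dominated c' S"
  unfolding exp_dominated_def
proof (intro allI impI)
  fix \<tau> z1 z2 :: complex assume "Im \<tau> > 0"
  then obtain \<epsilon> where \<epsilon>: "\<epsilon> > 0"
    and major: "(\<lambda>x. norm (fourier_term c \<tau> z1 z2 x) * exp (\<epsilon> * freq_weight x)) summable_on S"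
    using assms unfolding exp_dominated_def by blast
  have "(\<lambda>x. norm (fourier_term c \<tau> z1 z2 x) * freq_weight x * exp ((\<epsilon>/2) * freq_weight x))
          summable_on S"
    by (rule weight_summable[OF major \<epsilon>]) (auto simp: freq_weight_nonneg)
  then have scaled: "(\<lambda>x. (2*pi) * (norm (fourier_term c \<tau> z1 z2 x) * freq_weight x
                             * exp ((\<epsilon>/2) * freq_weight x))) summable_on S"
    by (rule summable_on_cmult_right)
  have "(\<lambda>x. norm (fourier_term c' \<tau> z1 z2 x) * exp ((\<epsilon>/2) * freq_weight x)) summable_on S"
  proof (rule summable_on_comparison_test[OF scaled])
    fix x
    have "norm (fourier_term c' \<tau> z1 z2 x) * exp ((\<epsilon>/2) * freq_weight x)
        \<le> (2 * pi * freq_weight x * norm (fourier_term c \<tau> z1 z2 x)) * exp ((\<epsilon>/2) * freq_weight x)"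
      by (intro mult_right_mono multiplier) auto
    then show "norm (fourier_term c' \<tau> z1 z2 x) * exp ((\<epsilon>/2) * freq_weight x)
        \<le> (2*pi) * (norm (fourier_term c \<tau> z1 z2 x) * freq_weight x * exp ((\<epsilon>/2) * freq_weight x))"
      by (simp add: mult_ac)
  qed simp
  then show "\<exists>\<epsilon>>0. (\<lambda>x. norm (fourier_term c' \<tau> z1 z2 x) * exp (\<epsilon> * freq_weight x)) summable_on S"
    using \<epsilon> by (intro exI[of _ "\<epsilon>/2"]) auto
qed

lemma exp_dominated_coeff_derivs:
  assumes "exp_dominated c S"
  shows "exp_dominated (coeff_tau c) S" "exp_dominated (coeff_z1 c) S" "exp_dominated (coeff_z2 c) S"
proof -
  have n: "real (fst x) * norm y \<le> freq_weight x * norm y"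
    and r: "cmod (snd x) * norm y \<le> freq_weight x * norm y" for x and y :: complex
    unfolding freq_weight_def by (simp_all add: mult_right_mono)
  show "exp_dominated (coeff_tau c) S"
    by (rule exp_dominated_multiplier[OF assms])
       (use n in \<open>simp add: fourier_term_coeff_tau norm_mult mult.assoc\<close>)
  show "exp_dominated (coeff_z1 c) S"
    by (rule exp_dominated_multiplier[OF assms])
       (use r in \<open>simp add: fourier_term_coeff_z1 norm_mult mult.assoc\<close>)
  show "exp_dominated (coeff_z2 c) S"
    by (rule exp_dominated_multiplier[OF assms])
       (use r in \<open>simp add: fourier_term_coeff_z2 norm_mult mult.assoc\<close>)
qed

lemma norm_frequency_pairing:
  fixes h0 h1 h2 :: complex
  shows "norm (of_nat (fst x) * h0 + snd x * h1 + cnj (snd x) * h2)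
           \<le> 2 * freq_weight x * norm (h0, h1, h2)"
proof -
  have n0: "norm h0 \<le> norm (h0, h1, h2)" by (rule norm_fst_le)
  have h12: "norm (h1, h2) \<le> norm (h0, h1, h2)" by (rule norm_snd_le)
  have n1: "norm h1 \<le> norm (h0, h1, h2)" using norm_fst_le h12 by (rule order_trans)
  have n2: "norm h2 \<le> norm (h0, h1, h2)" using norm_snd_le h12 by (rule order_trans)
  have "norm (of_nat (fst x) * h0 + snd x * h1 + cnj (snd x) * h2)
     \<le> real (fst x) * norm h0 + cmod (snd x) * norm h1 + cmod (snd x) * norm h2"
    by (rule order_trans[OF norm_triangle_ineq])
       (auto simp: norm_mult intro!: add_mono order_trans[OF norm_triangle_ineq])
  also have "\<dots> \<le> real (fst x) * norm (h0, h1, h2) + cmod (snd x) * norm (h0, h1, h2)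
                 + cmod (snd x) * norm (h0, h1, h2)"
    by (intro add_mono mult_left_mono n0 n1 n2) auto
  also have "\<dots> \<le> 2 * freq_weight x * norm (h0, h1, h2)"
    unfolding freq_weight_def by (simp add: algebra_simps)
  finally show ?thesis .
qed

lemma fourier_term_taylor:
  fixes h0 h1 h2 :: complex
  defines "h \<equiv> (h0, h1, h2)"
  shows "norm (fourier_term c (\<tau> + h0) (z1 + h1) (z2 + h2) x - fourier_term c \<tau> z1 z2 x
           - (fourier_term (coeff_tau c) \<tau> z1 z2 x * h0 + fourier_term (coeff_z1 c) \<tau> z1 z2 x * h1
              + fourier_term (coeff_z2 c) \<tau> z1 z2 x * h2))
         \<le> 16 * pi\<^sup>2 * (norm h)\<^sup>2 * (norm (fourier_term c \<tau> z1 z2 x) * (freq_weight x)\<^sup>2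
              * exp (4 * pi * norm h * freq_weight x))"
proof -
  define a where "a = norm (fourier_term c \<tau> z1 z2 x)"
  define L where "L = of_nat (fst x) * h0 + snd x * h1 + cnj (snd x) * h2"
  define w where "w = 2 * of_real pi * \<i> * L"
  have "fourier_term c (\<tau> + h0) (z1 + h1) (z2 + h2) x - fourier_term c \<tau> z1 z2 x
           - (fourier_term (coeff_tau c) \<tau> z1 z2 x * h0 + fourier_term (coeff_z1 c) \<tau> z1 z2 x * h1
              + fourier_term (coeff_z2 c) \<tau> z1 z2 x * h2)
        = fourier_term c \<tau> z1 z2 x * (exp w - 1 - w)"
    unfolding fourier_term_shift fourier_term_coeff_tau fourier_term_coeff_z1 fourier_term_coeff_z2
      w_def L_def ee_def[symmetric] by (simp add: algebra_simps)
  moreover have "norm w \<le> 4 * pi * norm h * freq_weight x"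
  proof -
    have "norm w = 2 * pi * norm L" unfolding w_def by (simp add: norm_mult)
    also have "\<dots> \<le> 2 * pi * (2 * freq_weight x * norm h)"
      unfolding L_def h_def by (intro mult_left_mono norm_frequency_pairing) auto
    finally show ?thesis by (simp add: mult_ac)
  qed
  then have "norm (exp w - 1 - w)
        \<le> (4 * pi * norm h * freq_weight x)\<^sup>2 * exp (4 * pi * norm h * freq_weight x)"
    by (intro order_trans[OF exp_remainder_bound] mult_mono power_mono) auto
  ultimately have "norm (fourier_term c (\<tau> + h0) (z1 + h1) (z2 + h2) x - fourier_term c \<tau> z1 z2 x
           - (fourier_term (coeff_tau c) \<tau> z1 z2 x * h0 + fourier_term (coeff_z1 c) \<tau> z1 z2 x * h1
              + fourier_term (coeff_z2 c) \<tau> z1 z2 x * h2))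
        \<le> a * ((4 * pi * norm h * freq_weight x)\<^sup>2 * exp (4 * pi * norm h * freq_weight x))"
    unfolding a_def by (simp add: norm_mult mult_left_mono)
  then show ?thesis unfolding a_def by (simp add: power2_eq_square mult_ac)
qed

lemma has_sum_diff:
  fixes f g :: "'a \<Rightarrow> complex"
  assumes "(f has_sum a) A" "(g has_sum b) A"
  shows "((\<lambda>x. f x - g x) has_sum (a - b)) A"
proof -
  have "((\<lambda>x. - g x) has_sum (- b)) A" using assms(2) by (simp add: has_sum_uminus)
  from has_sum_add[OF assms(1) this] show ?thesis by simp
qed

lemma bounded_linear_form3:
  fixes P Q R :: complex
  shows "bounded_linear (\<lambda>(u, v, w). P * u + Q * v + R * w)"
proof -
  have "linear (\<lambda>(u, v, w). P * u + Q * v + R * w)"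
    by (auto simp: linear_iff algebra_simps split: prod.splits)
  then show ?thesis by (simp add: linear_conv_bounded_linear)
qed

lemma exp_dominated_second_moment:
  assumes "exp_dominated c S" "Im \<tau> > 0"
  obtains \<epsilon> where "\<epsilon> > 0"
    "(\<lambda>x. norm (fourier_term c \<tau> z1 z2 x) * (freq_weight x)\<^sup>2 * exp (\<epsilon> * freq_weight x)) summable_on S"
proof -
  obtain \<epsilon> where \<epsilon>: "\<epsilon> > 0"
    and major: "(\<lambda>x. norm (fourier_term c \<tau> z1 z2 x) * exp (\<epsilon> * freq_weight x)) summable_on S"
    using assms unfolding exp_dominated_def by blast
  have "(\<lambda>x. norm (fourier_term c \<tau> z1 z2 x) * freq_weight x * exp ((\<epsilon>/2) * freq_weight x))
          summable_on S"
    by (rule weight_summable[OF major \<epsilon>]) (auto simp: freq_weight_nonneg)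
  then have "(\<lambda>x. norm (fourier_term c \<tau> z1 z2 x) * freq_weight x * freq_weight x
               * exp ((\<epsilon>/2/2) * freq_weight x)) summable_on S"
    by (rule weight_summable) (use \<epsilon> in \<open>auto simp: freq_weight_nonneg\<close>)
  then show thesis
    by (intro that[of "\<epsilon>/2/2"]) (use \<epsilon> in \<open>simp_all add: power2_eq_square mult.assoc\<close>)
qed

lemma has_derivative_quadratic_remainder:
  fixes F :: "'a::real_normed_vector \<Rightarrow> 'b::real_normed_vector"
  assumes "bounded_linear D" "\<delta> > 0"
    and remainder: "\<And>h. norm h < \<delta> \<Longrightarrow> norm (F (x + h) - F x - D h) \<le> K * (norm h)\<^sup>2"
  shows "(F has_derivative D) (at x)"
proof -
  have "((\<lambda>h. norm (F (x + h) - F x - D h) / norm h) \<longlongrightarrow> 0) (at 0)"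
  proof (rule Lim_null_comparison)
    show "\<forall>\<^sub>F h in at 0. norm (norm (F (x + h) - F x - D h) / norm h) \<le> K * norm h"
      unfolding eventually_at
    proof (intro exI[of _ \<delta>] conjI ballI impI)
      fix h :: 'a assume "h \<noteq> 0 \<and> dist h 0 < \<delta>"
      then have h: "h \<noteq> 0" "norm h < \<delta>" by auto
      have "norm (F (x + h) - F x - D h) / norm h \<le> K * (norm h)\<^sup>2 / norm h"
        by (intro divide_right_mono remainder h) simp
      also have "\<dots> = K * norm h" using h(1) by (simp add: power2_eq_square)
      finally show "norm (norm (F (x + h) - F x - D h) / norm h) \<le> K * norm h" by simp
    qed (use assms(2) in auto)
    show "((\<lambda>h. K * norm h) \<longlongrightarrow> 0) (at 0)"
      by (intro tendsto_eq_intros) auto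
  qed
  then show ?thesis unfolding has_derivative_at using assms(1) by blast
qed

lemma fourier_series_has_derivative:
  assumes expansion: "\<And>\<tau> z1 z2. Im \<tau> > 0 \<Longrightarrow> (fourier_term c \<tau> z1 z2 has_sum f \<tau> z1 z2) S"
    and tau: "Im \<tau> > 0"
  shows "((\<lambda>(t, x, y). f t x y) has_derivative
           (\<lambda>(u, v, w). infsum (fourier_term (coeff_tau c) \<tau> z1 z2) S * u
                      + infsum (fourier_term (coeff_z1 c) \<tau> z1 z2) S * v
                      + infsum (fourier_term (coeff_z2 c) \<tau> z1 z2) S * w)) (at (\<tau>, z1, z2))"
proof -
  define F where "F = (\<lambda>(t, x, y). f t x y)"
  define P where "P = infsum (fourier_term (coeff_tau c) \<tau> z1 z2) S"
  define Q where "Q = infsum (fourier_term (coeff_z1 c) \<tau> z1 z2) S"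
  define R where "R = infsum (fourier_term (coeff_z2 c) \<tau> z1 z2) S"
  define D where "D = (\<lambda>(u, v, w). P * u + Q * v + R * w)"
  have dom: "exp_dominated c S"
    by (rule exp_dominated_if_summable) (use expansion has_sum_imp_summable in blast)
  note dom' = exp_dominated_coeff_derivs[OF dom]
  have P: "(fourier_term (coeff_tau c) \<tau> z1 z2 has_sum P) S"
    unfolding P_def using exp_dominated_summable[OF dom'(1) tau] by simp
  have Q: "(fourier_term (coeff_z1 c) \<tau> z1 z2 has_sum Q) S"
    unfolding Q_def using exp_dominated_summable[OF dom'(2) tau] by simp
  have R: "(fourier_term (coeff_z2 c) \<tau> z1 z2 has_sum R) S"
    unfolding R_def using exp_dominated_summable[OF dom'(3) tau] by simp
  obtain \<epsilon> where \<epsilon>: "\<epsilon> > 0"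
    and moment: "(\<lambda>x. norm (fourier_term c \<tau> z1 z2 x) * (freq_weight x)\<^sup>2 * exp (\<epsilon> * freq_weight x))
                   summable_on S"
    by (rule exp_dominated_second_moment[OF dom tau])
  define W where "W x = norm (fourier_term c \<tau> z1 z2 x) * (freq_weight x)\<^sup>2 * exp (\<epsilon> * freq_weight x)"
    for x
  have W: "(W has_sum infsum W S) S"
    using moment unfolding W_def by simp
  define \<delta> where "\<delta> = min (Im \<tau>) (\<epsilon> / (4 * pi))"
  have \<delta>: "\<delta> > 0" using tau \<epsilon> unfolding \<delta>_def by simp
  have remainder: "norm (F ((\<tau>, z1, z2) + h) - F (\<tau>, z1, z2) - D h) \<le> 16 * pi\<^sup>2 * infsum W S * (norm h)\<^sup>2"
    if h: "norm h < \<delta>" for h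
  proof -
    obtain h0 h1 h2 where hh: "h = (h0, h1, h2)" by (cases h) auto
    have "\<bar>Im h0\<bar> < Im \<tau>"
      using h abs_Im_le_cmod[of h0] norm_fst_le[of h0 "(h1, h2)"] unfolding hh \<delta>_def by linarith
    then have tau': "Im (\<tau> + h0) > 0" by simp
    have "((\<lambda>x. fourier_term c (\<tau> + h0) (z1 + h1) (z2 + h2) x - fourier_term c \<tau> z1 z2 x
             - (fourier_term (coeff_tau c) \<tau> z1 z2 x * h0 + fourier_term (coeff_z1 c) \<tau> z1 z2 x * h1
                + fourier_term (coeff_z2 c) \<tau> z1 z2 x * h2))
          has_sum (F ((\<tau>, z1, z2) + h) - F (\<tau>, z1, z2) - D h)) S"
      unfolding hh F_def D_def
      by (auto intro!: has_sum_diff has_sum_add has_sum_cmult_left expansion tau tau' P Q R)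
    moreover have "norm (fourier_term c (\<tau> + h0) (z1 + h1) (z2 + h2) x - fourier_term c \<tau> z1 z2 x
             - (fourier_term (coeff_tau c) \<tau> z1 z2 x * h0 + fourier_term (coeff_z1 c) \<tau> z1 z2 x * h1
                + fourier_term (coeff_z2 c) \<tau> z1 z2 x * h2)) \<le> 16 * pi\<^sup>2 * (norm h)\<^sup>2 * W x" for x
    proof -
      have "4 * pi * norm h \<le> \<epsilon>" using h unfolding \<delta>_def by (simp add: field_simps)
      then have "4 * pi * norm h * freq_weight x \<le> \<epsilon> * freq_weight x"
        by (rule mult_right_mono) (rule freq_weight_nonneg)
      then have "exp (4 * pi * norm h * freq_weight x) \<le> exp (\<epsilon> * freq_weight x)"
        by simp
      then show ?thesis
        using fourier_term_taylor[of c \<tau> h0 z1 h1 z2 h2 x] unfolding W_def hh[symmetric]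
        by (smt (verit, best) mult_left_mono mult_nonneg_nonneg norm_ge_zero zero_le_power2
              pi_ge_zero)
    qed
    ultimately have "norm (F ((\<tau>, z1, z2) + h) - F (\<tau>, z1, z2) - D h) \<le> 16 * pi\<^sup>2 * (norm h)\<^sup>2 * infsum W S"
      using has_sum_cmult_right[OF W, of "16 * pi\<^sup>2 * (norm h)\<^sup>2"] norm_infsum_le by blast
    then show ?thesis by (simp only: mult_ac)
  qed
  have "(F has_derivative D) (at (\<tau>, z1, z2))"
  proof (rule has_derivative_quadratic_remainder[OF _ \<delta> remainder])
    show "bounded_linear D" unfolding D_def by (rule bounded_linear_form3)
  qed
  then show ?thesis unfolding F_def D_def P_def Q_def R_def .
qed

lemma partials_from_has_derivative:
  fixes P Q R :: complex
  assumes "((\<lambda>(t, x, y). f t x y) has_derivative (\<lambda>(u, v, w). P * u + Q * v + R * w)) (at (\<tau>, z1, z2))"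
  shows "((\<lambda>w. f \<tau> w z2) has_field_derivative Q) (at z1)"
    and "((\<lambda>w. f \<tau> z1 w) has_field_derivative R) (at z2)"
proof -
  have "((\<lambda>w. (\<tau>, w, z2)) has_derivative (\<lambda>v. (0, v, 0))) (at z1)"
    by (auto intro!: derivative_eq_intros)
  from has_derivative_compose[OF this assms]
  show "((\<lambda>w. f \<tau> w z2) has_field_derivative Q) (at z1)"
    unfolding has_field_derivative_def by (simp add: mult.commute[of _ Q] mult.commute[of _ R])
  have "((\<lambda>w. (\<tau>, z1, w)) has_derivative (\<lambda>v. (0, 0, v))) (at z2)"
    by (auto intro!: derivative_eq_intros)
  from has_derivative_compose[OF this assms]
  show "((\<lambda>w. f \<tau> z1 w) has_field_derivative R) (at z2)"
    unfolding has_field_derivative_def by (simp add: mult.commute[of _ Q] mult.commute[of _ R])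
qed

lemma fourier_series_partials:
  assumes expansion: "\<And>\<tau> z1 z2. Im \<tau> > 0 \<Longrightarrow> (fourier_term c \<tau> z1 z2 has_sum f \<tau> z1 z2) S"
    and tau: "Im \<tau> > 0"
  shows "(fourier_term (coeff_z1 c) \<tau> z1 z2 has_sum pd1 f \<tau> z1 z2) S"
    and "(fourier_term (coeff_z2 c) \<tau> z1 z2 has_sum pd2 f \<tau> z1 z2) S"
    and "((\<lambda>w. f \<tau> w z2) has_field_derivative pd1 f \<tau> z1 z2) (at z1)"
    and "((\<lambda>w. f \<tau> z1 w) has_field_derivative pd2 f \<tau> z1 z2) (at z2)"
proof -
  note partials = partials_from_has_derivative[OF fourier_series_has_derivative[OF expansion tau]]
  have pd1_eq: "pd1 f \<tau> z1 z2 = infsum (fourier_term (coeff_z1 c) \<tau> z1 z2) S"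
    unfolding pd1_def by (rule DERIV_imp_deriv[OF partials(1)])
  have pd2_eq: "pd2 f \<tau> z1 z2 = infsum (fourier_term (coeff_z2 c) \<tau> z1 z2) S"
    unfolding pd2_def by (rule DERIV_imp_deriv[OF partials(2)])
  have dom: "exp_dominated c S"
    by (rule exp_dominated_if_summable) (use expansion has_sum_imp_summable in blast)
  show "(fourier_term (coeff_z1 c) \<tau> z1 z2 has_sum pd1 f \<tau> z1 z2) S"
    unfolding pd1_eq using exp_dominated_summable[OF exp_dominated_coeff_derivs(2)[OF dom] tau] by simp
  show "(fourier_term (coeff_z2 c) \<tau> z1 z2 has_sum pd2 f \<tau> z1 z2) S"
    unfolding pd2_eq using exp_dominated_summable[OF exp_dominated_coeff_derivs(3)[OF dom] tau] by simp
  show "((\<lambda>w. f \<tau> w z2) has_field_derivative pd1 f \<tau> z1 z2) (at z1)"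
    unfolding pd1_eq by (rule partials(1))
  show "((\<lambda>w. f \<tau> z1 w) has_field_derivative pd2 f \<tau> z1 z2) (at z2)"
    unfolding pd2_eq by (rule partials(2))
qed

section \<open>Fourier expansions of index m\<close>

definition jacobi_support :: "nat \<Rightarrow> (nat \<times> complex) set" where
  "jacobi_support m = {(n, r). r \<in> gauss_dual \<and> (cmod r)\<^sup>2 \<le> real (n * m)}"

definition jacobi_fourier :: "nat \<Rightarrow> (complex \<Rightarrow> complex \<Rightarrow> complex \<Rightarrow> complex) \<Rightarrow> bool" where
  "jacobi_fourier m f \<longleftrightarrow>
     (\<exists>c. \<forall>\<tau> z1 z2. Im \<tau> > 0 \<longrightarrow> (fourier_term c \<tau> z1 z2 has_sum f \<tau> z1 z2) (jacobi_support m))"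

lemma jacobi_fourier_holo3: "jacobi_fourier m f \<Longrightarrow> holo3 f"
  unfolding jacobi_fourier_def holo3_def using fourier_series_has_derivative by blast

lemma jacobi_fourier_pd1: "jacobi_fourier m f \<Longrightarrow> jacobi_fourier m (pd1 f)"
  unfolding jacobi_fourier_def using fourier_series_partials(1) by blast

lemma jacobi_fourier_pd2: "jacobi_fourier m f \<Longrightarrow> jacobi_fourier m (pd2 f)"
  unfolding jacobi_fourier_def using fourier_series_partials(2) by blast

definition z_derivs :: "(complex \<Rightarrow> complex \<Rightarrow> complex \<Rightarrow> complex) \<Rightarrow> complex \<Rightarrow> bool" where
  "z_derivs \<phi> t \<longleftrightarrow> (\<forall>z1 z2.
      ((\<lambda>w. \<phi> t w z2) has_field_derivative pd1 \<phi> t z1 z2) (at z1)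
    \<and> ((\<lambda>w. \<phi> t z1 w) has_field_derivative pd2 \<phi> t z1 z2) (at z2)
    \<and> ((\<lambda>w. pd1 \<phi> t w z2) has_field_derivative pd1 (pd1 \<phi>) t z1 z2) (at z1))"

lemma jacobi_fourier_z_derivs:
  assumes "jacobi_fourier m \<phi>" "Im t > 0"
  shows "z_derivs \<phi> t"
proof -
  obtain c where c: "\<And>\<tau> z1 z2. Im \<tau> > 0 \<Longrightarrow> (fourier_term c \<tau> z1 z2 has_sum \<phi> \<tau> z1 z2) (jacobi_support m)"
    using assms(1) unfolding jacobi_fourier_def by blast
  obtain c' where c': "\<And>\<tau> z1 z2. Im \<tau> > 0 \<Longrightarrow> (fourier_term c' \<tau> z1 z2 has_sum pd1 \<phi> \<tau> z1 z2) (jacobi_support m)"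
    using jacobi_fourier_pd1[OF assms(1)] unfolding jacobi_fourier_def by blast
  show ?thesis
    unfolding z_derivs_def
    using fourier_series_partials(3,4)[OF c assms(2)] fourier_series_partials(3)[OF c' assms(2)] by blast
qed

lemma jacobi_fourier_cong:
  "jacobi_fourier m f \<Longrightarrow> (\<And>\<tau> z1 z2. Im \<tau> > 0 \<Longrightarrow> f \<tau> z1 z2 = g \<tau> z1 z2) \<Longrightarrow> jacobi_fourier m g"
  unfolding jacobi_fourier_def by metis

lemma jacobi_fourier_cmult: "jacobi_fourier m f \<Longrightarrow> jacobi_fourier m (\<lambda>t x y. a * f t x y)"
  unfolding jacobi_fourier_def
proof (elim exE, intro exI[of _ "\<lambda>n r. a * _ n r"] allI impI)
  fix c \<tau> z1 z2
  assume "\<forall>\<tau> z1 z2. 0 < Im \<tau> \<longrightarrow> (fourier_term c \<tau> z1 z2 has_sum f \<tau> z1 z2) (jacobi_support m)"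
    and "Im \<tau> > 0"
  then have "((\<lambda>x. a * fourier_term c \<tau> z1 z2 x) has_sum a * f \<tau> z1 z2) (jacobi_support m)"
    by (intro has_sum_cmult_right) auto
  moreover have "fourier_term (\<lambda>n r. a * c n r) \<tau> z1 z2 = (\<lambda>x. a * fourier_term c \<tau> z1 z2 x)"
    by (rule ext, case_tac x) (simp add: fourier_term_def)
  ultimately show "(fourier_term (\<lambda>n r. a * c n r) \<tau> z1 z2 has_sum a * f \<tau> z1 z2) (jacobi_support m)"
    by simp
qed

lemma jacobi_fourier_add:
  "jacobi_fourier m f \<Longrightarrow> jacobi_fourier m g \<Longrightarrow> jacobi_fourier m (\<lambda>t x y. f t x y + g t x y)"
  unfolding jacobi_fourier_def
proof (elim exE, intro exI[of _ "\<lambda>n r. _ n r + _ n r"] allI impI)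
  fix cf cg \<tau> z1 z2
  assume "\<forall>\<tau> z1 z2. 0 < Im \<tau> \<longrightarrow> (fourier_term cf \<tau> z1 z2 has_sum f \<tau> z1 z2) (jacobi_support m)"
    and "\<forall>\<tau> z1 z2. 0 < Im \<tau> \<longrightarrow> (fourier_term cg \<tau> z1 z2 has_sum g \<tau> z1 z2) (jacobi_support m)"
    and "Im \<tau> > 0"
  then have "((\<lambda>x. fourier_term cf \<tau> z1 z2 x + fourier_term cg \<tau> z1 z2 x)
               has_sum f \<tau> z1 z2 + g \<tau> z1 z2) (jacobi_support m)"
    by (intro has_sum_add) auto
  moreover have "fourier_term (\<lambda>n r. cf n r + cg n r) \<tau> z1 z2
                   = (\<lambda>x. fourier_term cf \<tau> z1 z2 x + fourier_term cg \<tau> z1 z2 x)"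
    by (rule ext, case_tac x) (simp add: fourier_term_def algebra_simps)
  ultimately show "(fourier_term (\<lambda>n r. cf n r + cg n r) \<tau> z1 z2 has_sum f \<tau> z1 z2 + g \<tau> z1 z2)
                     (jacobi_support m)"
    by simp
qed

lemma jacobi_fourier_diff:
  assumes "jacobi_fourier m f" "jacobi_fourier m g"
  shows "jacobi_fourier m (\<lambda>t x y. f t x y - g t x y)"
proof -
  have "jacobi_fourier m (\<lambda>t x y. f t x y + (\<lambda>t x y. (-1) * g t x y) t x y)"
    using assms by (intro jacobi_fourier_add jacobi_fourier_cmult)
  then show ?thesis by (rule jacobi_fourier_cong) simp
qed

lemma has_sum_product_complex:
  fixes f g :: "_ \<Rightarrow> complex"
  assumes f: "(f has_sum a) A" and g: "(g has_sum b) B"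
  shows "((\<lambda>(x, y). f x * g y) has_sum (a * b)) (A \<times> B)"
proof -
  have fa: "(\<lambda>x. norm (f x)) summable_on A"
    using has_sum_imp_summable[OF f] summable_on_iff_abs_summable_on_complex by blast
  have ga: "(\<lambda>x. norm (g x)) summable_on B"
    using has_sum_imp_summable[OF g] summable_on_iff_abs_summable_on_complex by blast
  have "(\<lambda>z. norm ((\<lambda>(x, y). f x * g y) z)) summable_on Sigma A (\<lambda>_. B)"
  proof (rule Infinite_Sum.abs_summable_on_Sigma_iff[where f="\<lambda>(x, y). f x * g y" and A=A and B="\<lambda>_. B", THEN iffD2], intro conjI ballI)
    fix x assume "x \<in> A"
    show "(\<lambda>y. norm ((\<lambda>(x, y). f x * g y) (x, y))) summable_on B"
      using summable_on_cmult_right[OF ga, of "norm (f x)"] by (simp add: norm_mult)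
  next
    have "(\<lambda>x. norm (f x) * infsum (\<lambda>y. norm (g y)) B) summable_on A"
      by (rule summable_on_cmult_left[OF fa])
    moreover have "infsum (\<lambda>y. norm ((\<lambda>(x, y). f x * g y) (x, y))) B
                     = norm (f x) * infsum (\<lambda>y. norm (g y)) B" for x
      by (simp add: norm_mult infsum_cmult_right')
    ultimately show "(\<lambda>x. norm (infsum (\<lambda>y. norm ((\<lambda>(x, y). f x * g y) (x, y))) B)) summable_on A"
      by (simp add: infsum_nonneg)
  qed
  then have "(\<lambda>(x, y). f x * g y) summable_on Sigma A (\<lambda>_. B)"
    using summable_on_iff_abs_summable_on_complex by blast
  then show ?thesis
    by (rule has_sum_SigmaI[rotated 2]) (use has_sum_cmult_right[OF g] has_sum_cmult_left[OF f] in auto)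
qed

lemma has_sum_fibres:
  fixes f :: "'a \<Rightarrow> 'b::{banach, uniform_topological_group_add}" and p :: "'a \<Rightarrow> 'c"
  assumes "(f has_sum s) X"
  shows "((\<lambda>q. infsum f {z \<in> X. p z = q}) has_sum s) (p ` X)"
proof -
  have "bij_betw (\<lambda>z. (p z, z)) X (Sigma (p ` X) (\<lambda>q. {z \<in> X. p z = q}))"
    by (auto simp: bij_betw_def inj_on_def image_iff)
  then have "((\<lambda>(q, z). f z) has_sum s) (Sigma (p ` X) (\<lambda>q. {z \<in> X. p z = q}))"
    using assms has_sum_reindex_bij_betw[where f="\<lambda>(q, z). f z"] by fastforce
  moreover have "(f has_sum infsum f {z \<in> X. p z = q}) {z \<in> X. p z = q}" for q
    using summable_on_subset_banach[OF has_sum_imp_summable[OF assms]] by (intro has_sum_infsum) auto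
  ultimately show ?thesis
    using has_sum_Sigma'[where f="\<lambda>(q, z). f z"] by fastforce
qed

lemma gauss_dual_add: "r1 \<in> gauss_dual \<Longrightarrow> r2 \<in> gauss_dual \<Longrightarrow> r1 + r2 \<in> gauss_dual"
proof -
  assume "r1 \<in> gauss_dual" "r2 \<in> gauss_dual"
  then obtain a1 b1 a2 b2 :: int
    where r: "r1 = (\<i>/2) * (of_int a1 + \<i> * of_int b1)" "r2 = (\<i>/2) * (of_int a2 + \<i> * of_int b2)"
    unfolding gauss_dual_def gauss_ints_def by blast
  have "r1 + r2 = (\<i>/2) * (of_int (a1 + a2) + \<i> * of_int (b1 + b2))"
    unfolding r by (simp add: algebra_simps)
  then show ?thesis unfolding gauss_dual_def gauss_ints_def by blast
qed

text \<open>The support condition is superadditive, by a Cauchy--Schwarz type inequality.\<close>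
lemma sq_sum_le_prod_sum:
  fixes a b n1 n2 m1 m2 :: real
  assumes "0 \<le> a" "0 \<le> b" "0 \<le> n1" "0 \<le> n2" "0 \<le> m1" "0 \<le> m2"
    and "a\<^sup>2 \<le> n1 * m1" "b\<^sup>2 \<le> n2 * m2"
  shows "(a + b)\<^sup>2 \<le> (n1 + n2) * (m1 + m2)"
proof -
  have "(2*a*b)\<^sup>2 = 4 * (a\<^sup>2 * b\<^sup>2)" by (simp add: power2_eq_square)
  also have "\<dots> \<le> 4 * ((n1 * m1) * (n2 * m2))"
    using assms by (intro mult_left_mono mult_mono) auto
  also have "\<dots> \<le> (n1 * m2 + n2 * m1)\<^sup>2"
    using zero_le_power2[of "n1 * m2 - n2 * m1"] by (simp add: power2_eq_square algebra_simps)
  finally have "2*a*b \<le> n1 * m2 + n2 * m1"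
    by (rule power2_le_imp_le) (use assms in simp)
  then show ?thesis using assms by (simp add: power2_eq_square algebra_simps)
qed

lemma jacobi_support_add:
  assumes "(n1, r1) \<in> jacobi_support m1" "(n2, r2) \<in> jacobi_support m2"
  shows "(n1 + n2, r1 + r2) \<in> jacobi_support (m1 + m2)"
proof -
  have dual: "r1 + r2 \<in> gauss_dual" using assms gauss_dual_add unfolding jacobi_support_def by auto
  have "(cmod (r1 + r2))\<^sup>2 \<le> (cmod r1 + cmod r2)\<^sup>2"
    by (rule power_mono[OF norm_triangle_ineq]) simp
  also have "(cmod r1 + cmod r2)\<^sup>2 \<le> (real n1 + real n2) * (real m1 + real m2)"
    using assms unfolding jacobi_support_def by (intro sq_sum_le_prod_sum) auto
  finally show ?thesis using dual unfolding jacobi_support_def by simp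
qed

text \<open>Products of expansions: the Cauchy product, grouped by total frequency.\<close>
lemma jacobi_fourier_mult:
  assumes "jacobi_fourier m1 f" "jacobi_fourier m2 g"
  shows "jacobi_fourier (m1 + m2) (\<lambda>t x y. f t x y * g t x y)"
proof -
  obtain c1 where c1: "\<And>\<tau> z1 z2. Im \<tau> > 0 \<Longrightarrow> (fourier_term c1 \<tau> z1 z2 has_sum f \<tau> z1 z2) (jacobi_support m1)"
    using assms(1) unfolding jacobi_fourier_def by blast
  obtain c2 where c2: "\<And>\<tau> z1 z2. Im \<tau> > 0 \<Longrightarrow> (fourier_term c2 \<tau> z1 z2 has_sum g \<tau> z1 z2) (jacobi_support m2)"
    using assms(2) unfolding jacobi_fourier_def by blast
  define X where "X = jacobi_support m1 \<times> jacobi_support m2"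
  define total :: "(nat \<times> complex) \<times> (nat \<times> complex) \<Rightarrow> nat \<times> complex"
    where "total z = (fst (fst z) + fst (snd z), snd (fst z) + snd (snd z))" for z
  define fib where "fib q = {z \<in> X. total z = q}" for q
  define cc where "cc z = c1 (fst (fst z)) (snd (fst z)) * c2 (fst (snd z)) (snd (snd z))" for z
  define c where "c n r = infsum cc (fib (n, r))" for n r
  have total_X: "total ` X \<subseteq> jacobi_support (m1 + m2)"
    using jacobi_support_add by (force simp: X_def total_def)
  have "(fourier_term c \<tau> z1 z2 has_sum f \<tau> z1 z2 * g \<tau> z1 z2) (jacobi_support (m1 + m2))"
    if tau: "Im \<tau> > 0" for \<tau> z1 z2
  proof -
    define E where "E q = ee (of_nat (fst q) * \<tau> + snd q * z1 + cnj (snd q) * z2)" for q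
    have split: "(\<lambda>(x, y). fourier_term c1 \<tau> z1 z2 x * fourier_term c2 \<tau> z1 z2 y) z = cc z * E (total z)"
      for z
    proof -
      obtain n1 r1 n2 r2 where z: "z = ((n1, r1), (n2, r2))" by (metis prod.collapse)
      have "of_nat (n1 + n2) * \<tau> + (r1 + r2) * z1 + cnj (r1 + r2) * z2 =
            (of_nat n1 * \<tau> + r1 * z1 + cnj r1 * z2) + (of_nat n2 * \<tau> + r2 * z1 + cnj r2 * z2)"
        by (simp add: algebra_simps)
      then show ?thesis unfolding z cc_def fourier_term_def E_def total_def by (simp add: ee_add)
    qed
    have "((\<lambda>(x, y). fourier_term c1 \<tau> z1 z2 x * fourier_term c2 \<tau> z1 z2 y)
            has_sum f \<tau> z1 z2 * g \<tau> z1 z2) X"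
      unfolding X_def by (rule has_sum_product_complex[OF c1[OF tau] c2[OF tau]])
    then have "((\<lambda>z. cc z * E (total z)) has_sum f \<tau> z1 z2 * g \<tau> z1 z2) X"
      unfolding split .
    then have grouped: "((\<lambda>q. infsum (\<lambda>z. cc z * E (total z)) (fib q)) has_sum f \<tau> z1 z2 * g \<tau> z1 z2)
                          (total ` X)"
      unfolding fib_def by (rule has_sum_fibres)
    have fibre_sum: "infsum (\<lambda>z. cc z * E (total z)) (fib q) = fourier_term c \<tau> z1 z2 q" for q
    proof -
      have "infsum (\<lambda>z. cc z * E (total z)) (fib q) = infsum (\<lambda>z. cc z * E q) (fib q)"
        by (rule infsum_cong) (simp add: fib_def)
      also have "\<dots> = fourier_term c \<tau> z1 z2 q"
        by (cases q) (simp add: infsum_cmult_left' fourier_term_def c_def E_def)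
      finally show ?thesis .
    qed
    show ?thesis
    proof (rule has_sum_cong_neutral[THEN iffD1, OF _ _ _ grouped])
      fix q assume "q \<in> jacobi_support (m1 + m2) - total ` X"
      then have "fib q = {}" unfolding fib_def by auto
      then show "fourier_term c \<tau> z1 z2 q = 0" unfolding fibre_sum[symmetric] by simp
    qed (use total_X fibre_sum in auto)
  qed
  then show ?thesis unfolding jacobi_fourier_def by blast
qed

section \<open>The two differential combinations\<close>

definition bracket_z2 :: "nat \<Rightarrow> nat \<Rightarrow> (complex \<Rightarrow> complex \<Rightarrow> complex \<Rightarrow> complex)
    \<Rightarrow> (complex \<Rightarrow> complex \<Rightarrow> complex \<Rightarrow> complex) \<Rightarrow> complex \<Rightarrow> complex \<Rightarrow> complex \<Rightarrow> complex" where
  "bracket_z2 m1 m2 \<phi> \<psi> =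
     (\<lambda>\<tau> z1 z2. of_nat m1 * \<phi> \<tau> z1 z2 * pd2 \<psi> \<tau> z1 z2 - of_nat m2 * \<psi> \<tau> z1 z2 * pd2 \<phi> \<tau> z1 z2)"

definition bracket_z1 :: "nat \<Rightarrow> nat \<Rightarrow> (complex \<Rightarrow> complex \<Rightarrow> complex \<Rightarrow> complex)
    \<Rightarrow> (complex \<Rightarrow> complex \<Rightarrow> complex \<Rightarrow> complex) \<Rightarrow> complex \<Rightarrow> complex \<Rightarrow> complex \<Rightarrow> complex" where
  "bracket_z1 m1 m2 \<phi> \<psi> = (\<lambda>\<tau> z1 z2.
       (of_nat m1 * \<phi> \<tau> z1 z2 * pd1 \<psi> \<tau> z1 z2 - of_nat m2 * \<psi> \<tau> z1 z2 * pd1 \<phi> \<tau> z1 z2)\<^sup>2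
     + of_nat m1 * (\<phi> \<tau> z1 z2)\<^sup>2 * ((pd1 \<psi> \<tau> z1 z2)\<^sup>2 - \<psi> \<tau> z1 z2 * pd1 (pd1 \<psi>) \<tau> z1 z2)
     + of_nat m2 * (\<psi> \<tau> z1 z2)\<^sup>2 * ((pd1 \<phi> \<tau> z1 z2)\<^sup>2 - \<phi> \<tau> z1 z2 * pd1 (pd1 \<phi>) \<tau> z1 z2))"

lemma jacobi_fourier_bracket_z2:
  assumes "jacobi_fourier m1 \<phi>" "jacobi_fourier m2 \<psi>"
  shows "jacobi_fourier (m1 + m2) (bracket_z2 m1 m2 \<phi> \<psi>)"
proof -
  have "jacobi_fourier (m1 + m2) (\<lambda>t x y. (\<lambda>t x y. of_nat m1 * \<phi> t x y) t x y * pd2 \<psi> t x y)"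
    using assms by (intro jacobi_fourier_mult jacobi_fourier_cmult jacobi_fourier_pd2)
  moreover have "jacobi_fourier (m2 + m1) (\<lambda>t x y. (\<lambda>t x y. of_nat m2 * \<psi> t x y) t x y * pd2 \<phi> t x y)"
    using assms by (intro jacobi_fourier_mult jacobi_fourier_cmult jacobi_fourier_pd2)
  ultimately show ?thesis
    unfolding bracket_z2_def by (simp add: add.commute[of m2] jacobi_fourier_diff)
qed

lemma jacobi_fourier_bracket_z1:
  assumes \<phi>: "jacobi_fourier m1 \<phi>" and \<psi>: "jacobi_fourier m2 \<psi>"
  shows "jacobi_fourier (2 * (m1 + m2)) (bracket_z1 m1 m2 \<phi> \<psi>)"
proof -
  define A where "A = (\<lambda>t x y. of_nat m1 * \<phi> t x y * pd1 \<psi> t x y - of_nat m2 * \<psi> t x y * pd1 \<phi> t x y)"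
  define R\<psi> where "R\<psi> = (\<lambda>t x y. pd1 \<psi> t x y * pd1 \<psi> t x y - \<psi> t x y * pd1 (pd1 \<psi>) t x y)"
  define R\<phi> where "R\<phi> = (\<lambda>t x y. pd1 \<phi> t x y * pd1 \<phi> t x y - \<phi> t x y * pd1 (pd1 \<phi>) t x y)"
  have "jacobi_fourier (m1 + m2) (\<lambda>t x y. (\<lambda>t x y. of_nat m1 * \<phi> t x y) t x y * pd1 \<psi> t x y)"
    using assms by (intro jacobi_fourier_mult jacobi_fourier_cmult jacobi_fourier_pd1)
  moreover have "jacobi_fourier (m2 + m1) (\<lambda>t x y. (\<lambda>t x y. of_nat m2 * \<psi> t x y) t x y * pd1 \<phi> t x y)"
    using assms by (intro jacobi_fourier_mult jacobi_fourier_cmult jacobi_fourier_pd1)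
  ultimately have "jacobi_fourier (m1 + m2) A"
    unfolding A_def by (simp add: add.commute[of m2] jacobi_fourier_diff)
  then have AA: "jacobi_fourier (m1 + m1 + (m2 + m2)) (\<lambda>t x y. A t x y * A t x y)"
    using jacobi_fourier_mult[of "m1 + m2" A "m1 + m2" A] by (simp add: add_ac)
  have B: "jacobi_fourier (m1 + m1 + (m2 + m2))
             (\<lambda>t x y. (\<lambda>t x y. of_nat m1 * (\<phi> t x y * \<phi> t x y)) t x y * R\<psi> t x y)"
    unfolding R\<psi>_def using assms
    by (intro jacobi_fourier_mult jacobi_fourier_cmult jacobi_fourier_diff jacobi_fourier_pd1)
  have C: "jacobi_fourier (m2 + m2 + (m1 + m1))
             (\<lambda>t x y. (\<lambda>t x y. of_nat m2 * (\<psi> t x y * \<psi> t x y)) t x y * R\<phi> t x y)"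
    unfolding R\<phi>_def using assms
    by (intro jacobi_fourier_mult jacobi_fourier_cmult jacobi_fourier_diff jacobi_fourier_pd1)
  have idx: "2 * (m1 + m2) = m1 + m1 + (m2 + m2)" by simp
  have "jacobi_fourier (2 * (m1 + m2)) (\<lambda>t x y. A t x y * A t x y
          + of_nat m1 * (\<phi> t x y * \<phi> t x y) * R\<psi> t x y + of_nat m2 * (\<psi> t x y * \<psi> t x y) * R\<phi> t x y)"
    using jacobi_fourier_add[OF jacobi_fourier_add[OF AA B] C[unfolded add.commute[of "m2 + m2"]]]
    unfolding idx .
  then show ?thesis
    by (rule jacobi_fourier_cong) (simp add: bracket_z1_def A_def R\<psi>_def R\<phi>_def power2_eq_square mult.assoc)
qed

section \<open>Transformation laws of the combinations\<close>

lemma deriv_through_factor: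
  fixes f g :: "complex \<Rightarrow> complex" and C mm k0 k1 :: complex
  assumes eq: "\<And>w. f w = C * exp (mm * (k0 + k1 * w)) * g w"
    and f: "(f has_field_derivative f') (at z)"
    and g: "(g has_field_derivative g') (at z)"
  shows "f' = C * exp (mm * (k0 + k1 * z)) * (mm * k1 * g z + g')"
proof -
  have "((\<lambda>w. C * exp (mm * (k0 + k1 * w)) * g w) has_field_derivative
          C * exp (mm * (k0 + k1 * z)) * (mm * k1 * g z + g')) (at z)"
    by (auto intro!: derivative_eq_intros g simp: algebra_simps)
  moreover have "f = (\<lambda>w. C * exp (mm * (k0 + k1 * w)) * g w)" using eq by auto
  ultimately show ?thesis using DERIV_unique f by blast
qed

lemma transform_first_partials:
  fixes \<phi> :: "complex \<Rightarrow> complex \<Rightarrow> complex \<Rightarrow> complex" and Q :: "complex \<Rightarrow> complex \<Rightarrow> complex"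
    and mm C p1 q1 p2 q2 e0 e1 e2 e12 :: complex
  assumes D: "z_derivs \<phi> \<tau>" and D': "z_derivs \<phi> \<tau>'"
    and Q: "\<And>z1 z2. Q z1 z2 = e0 + e1 * z1 + e2 * z2 + e12 * z1 * z2"
    and T: "\<And>z1 z2. \<phi> \<tau>' (p1 * z1 + q1) (p2 * z2 + q2) = C * exp (mm * Q z1 z2) * \<phi> \<tau> z1 z2"
  shows "pd2 \<phi> \<tau>' (p1 * z1 + q1) (p2 * z2 + q2) * p2
           = C * exp (mm * Q z1 z2) * (mm * (e2 + e12 * z1) * \<phi> \<tau> z1 z2 + pd2 \<phi> \<tau> z1 z2)"
    and "pd1 \<phi> \<tau>' (p1 * z1 + q1) (p2 * z2 + q2) * p1
           = C * exp (mm * Q z1 z2) * (mm * (e1 + e12 * z2) * \<phi> \<tau> z1 z2 + pd1 \<phi> \<tau> z1 z2)"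
proof -
  have lin: "((\<lambda>w. p * w + q) has_field_derivative p) (at w0)" for p q w0 :: complex
    by (auto intro!: derivative_eq_intros)
  have Q1: "Q w z2 = (e0 + e2 * z2) + (e1 + e12 * z2) * w" for w z2
    unfolding Q by (simp add: algebra_simps)
  have Q2: "Q z1 w = (e0 + e1 * z1) + (e2 + e12 * z1) * w" for z1 w
    unfolding Q by (simp add: algebra_simps)
  show "pd2 \<phi> \<tau>' (p1 * z1 + q1) (p2 * z2 + q2) * p2
           = C * exp (mm * Q z1 z2) * (mm * (e2 + e12 * z1) * \<phi> \<tau> z1 z2 + pd2 \<phi> \<tau> z1 z2)"
    unfolding Q2
  proof (rule deriv_through_factor[where g="\<lambda>w. \<phi> \<tau> z1 w"])
    show "\<phi> \<tau>' (p1 * z1 + q1) (p2 * w + q2) = C * exp (mm * ((e0 + e1 * z1) + (e2 + e12 * z1) * w)) * \<phi> \<tau> z1 w"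
      for w using T[of z1 w] unfolding Q2 .
    show "((\<lambda>w. \<phi> \<tau>' (p1 * z1 + q1) (p2 * w + q2)) has_field_derivative
             pd2 \<phi> \<tau>' (p1 * z1 + q1) (p2 * z2 + q2) * p2) (at z2)"
      using D' unfolding z_derivs_def by (auto intro!: DERIV_chain2[OF _ lin])
  qed (use D in \<open>auto simp: z_derivs_def\<close>)
  show "pd1 \<phi> \<tau>' (p1 * z1 + q1) (p2 * z2 + q2) * p1
           = C * exp (mm * Q z1 z2) * (mm * (e1 + e12 * z2) * \<phi> \<tau> z1 z2 + pd1 \<phi> \<tau> z1 z2)"
    unfolding Q1
  proof (rule deriv_through_factor[where g="\<lambda>w. \<phi> \<tau> w z2"])
    show "\<phi> \<tau>' (p1 * w + q1) (p2 * z2 + q2) = C * exp (mm * ((e0 + e2 * z2) + (e1 + e12 * z2) * w)) * \<phi> \<tau> w z2"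
      for w using T[of w z2] unfolding Q1 .
    show "((\<lambda>w. \<phi> \<tau>' (p1 * w + q1) (p2 * z2 + q2)) has_field_derivative
             pd1 \<phi> \<tau>' (p1 * z1 + q1) (p2 * z2 + q2) * p1) (at z1)"
      using D' unfolding z_derivs_def by (auto intro!: DERIV_chain2[OF _ lin])
  qed (use D in \<open>auto simp: z_derivs_def\<close>)
qed

lemma transform_second_partial:
  fixes \<phi> :: "complex \<Rightarrow> complex \<Rightarrow> complex \<Rightarrow> complex" and Q :: "complex \<Rightarrow> complex \<Rightarrow> complex"
    and mm C p1 q1 p2 q2 e0 e1 e2 e12 :: complex
  assumes D: "z_derivs \<phi> \<tau>" and D': "z_derivs \<phi> \<tau>'"
    and Q: "\<And>z1 z2. Q z1 z2 = e0 + e1 * z1 + e2 * z2 + e12 * z1 * z2"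
    and T: "\<And>z1 z2. \<phi> \<tau>' (p1 * z1 + q1) (p2 * z2 + q2) = C * exp (mm * Q z1 z2) * \<phi> \<tau> z1 z2"
  shows "pd1 (pd1 \<phi>) \<tau>' (p1 * z1 + q1) (p2 * z2 + q2) * p1 * p1
           = C * exp (mm * Q z1 z2) * ((mm * (e1 + e12 * z2))\<^sup>2 * \<phi> \<tau> z1 z2
               + 2 * (mm * (e1 + e12 * z2)) * pd1 \<phi> \<tau> z1 z2 + pd1 (pd1 \<phi>) \<tau> z1 z2)"
proof -
  have lin: "((\<lambda>w. p * w + q) has_field_derivative p) (at w0)" for p q w0 :: complex
    by (auto intro!: derivative_eq_intros)
  have Q1: "Q w z2 = (e0 + e2 * z2) + (e1 + e12 * z2) * w" for w z2
    unfolding Q by (simp add: algebra_simps)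
  define a where "a = mm * (e1 + e12 * z2)"
  have "pd1 (pd1 \<phi>) \<tau>' (p1 * z1 + q1) (p2 * z2 + q2) * p1 * p1
         = C * exp (mm * ((e0 + e2 * z2) + (e1 + e12 * z2) * z1))
           * (mm * (e1 + e12 * z2) * (a * \<phi> \<tau> z1 z2 + pd1 \<phi> \<tau> z1 z2)
              + (a * pd1 \<phi> \<tau> z1 z2 + pd1 (pd1 \<phi>) \<tau> z1 z2))"
  proof (rule deriv_through_factor[where g="\<lambda>w. a * \<phi> \<tau> w z2 + pd1 \<phi> \<tau> w z2"])
    show "pd1 \<phi> \<tau>' (p1 * w + q1) (p2 * z2 + q2) * p1
            = C * exp (mm * ((e0 + e2 * z2) + (e1 + e12 * z2) * w)) * (a * \<phi> \<tau> w z2 + pd1 \<phi> \<tau> w z2)"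
      for w using transform_first_partials(2)[where \<phi>=\<phi> and \<tau>=\<tau> and \<tau>'=\<tau>', OF D D' Q T, of w z2] unfolding Q1 a_def .
    show "((\<lambda>w. pd1 \<phi> \<tau>' (p1 * w + q1) (p2 * z2 + q2) * p1) has_field_derivative
             pd1 (pd1 \<phi>) \<tau>' (p1 * z1 + q1) (p2 * z2 + q2) * p1 * p1) (at z1)"
      using D' unfolding z_derivs_def by (auto intro!: DERIV_cmult_right DERIV_chain2[OF _ lin])
    show "((\<lambda>w. a * \<phi> \<tau> w z2 + pd1 \<phi> \<tau> w z2) has_field_derivative
             a * pd1 \<phi> \<tau> z1 z2 + pd1 (pd1 \<phi>) \<tau> z1 z2) (at z1)"
      using D unfolding z_derivs_def by (auto intro!: derivative_eq_intros)
  qed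
  then show ?thesis
    unfolding Q1 a_def by (simp add: algebra_simps power2_eq_square)
qed

text \<open>The ring identities behind the cancellation of the inhomogeneous terms.\<close>
lemma bracket_z2_cancellation:
  fixes X Y X' Y' f g f' g' A B a u m n :: complex
  assumes "X = A * f" "Y = B * g" "X' = A * (m * a * f + f') * u" "Y' = B * (n * a * g + g') * u"
  shows "m * X * Y' - n * Y * X' = A * B * u * (m * f * g' - n * g * f')"
  unfolding assms by algebra

lemma bracket_z1_cancellation:
  fixes X Y X' Y' X'' Y'' f g f' g' f'' g'' A B a u m n :: complex
  assumes "X = A * f" "Y = B * g"
    "X' = A * (m * a * f + f') * u" "Y' = B * (n * a * g + g') * u"
    "X'' = A * ((m * a)\<^sup>2 * f + 2 * (m * a) * f' + f'') * u\<^sup>2"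
    "Y'' = B * ((n * a)\<^sup>2 * g + 2 * (n * a) * g' + g'') * u\<^sup>2"
  shows "(m * X * Y' - n * Y * X')\<^sup>2 + m * X\<^sup>2 * (Y'\<^sup>2 - Y * Y'') + n * Y\<^sup>2 * (X'\<^sup>2 - X * X'')
       = (A * B * u)\<^sup>2 * ((m * f * g' - n * g * f')\<^sup>2 + m * f\<^sup>2 * (g'\<^sup>2 - g * g'') + n * g\<^sup>2 * (f'\<^sup>2 - f * f''))"
  unfolding assms by algebra

lemma bracket_transform:
  fixes \<phi> \<psi> :: "complex \<Rightarrow> complex \<Rightarrow> complex \<Rightarrow> complex" and Q :: "complex \<Rightarrow> complex \<Rightarrow> complex"
    and m1 m2 :: nat and C1 C2 p1 q1 p2 q2 e0 e1 e2 e12 :: complex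
  assumes "z_derivs \<phi> \<tau>" "z_derivs \<phi> \<tau>'" "z_derivs \<psi> \<tau>" "z_derivs \<psi> \<tau>'"
    and Q: "\<And>z1 z2. Q z1 z2 = e0 + e1 * z1 + e2 * z2 + e12 * z1 * z2"
    and T\<phi>: "\<And>z1 z2. \<phi> \<tau>' (p1 * z1 + q1) (p2 * z2 + q2) = C1 * exp (of_nat m1 * Q z1 z2) * \<phi> \<tau> z1 z2"
    and T\<psi>: "\<And>z1 z2. \<psi> \<tau>' (p1 * z1 + q1) (p2 * z2 + q2) = C2 * exp (of_nat m2 * Q z1 z2) * \<psi> \<tau> z1 z2"
    and p: "p1 \<noteq> 0" "p2 \<noteq> 0"
  shows "bracket_z2 m1 m2 \<phi> \<psi> \<tau>' (p1 * z1 + q1) (p2 * z2 + q2)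
           = C1 * C2 / p2 * exp (of_nat (m1 + m2) * Q z1 z2) * bracket_z2 m1 m2 \<phi> \<psi> \<tau> z1 z2"
    and "bracket_z1 m1 m2 \<phi> \<psi> \<tau>' (p1 * z1 + q1) (p2 * z2 + q2)
           = (C1 * C2 / p1)\<^sup>2 * exp (of_nat (2 * (m1 + m2)) * Q z1 z2) * bracket_z1 m1 m2 \<phi> \<psi> \<tau> z1 z2"
proof -
  note A = transform_first_partials[where \<phi>=\<phi> and \<tau>=\<tau> and \<tau>'=\<tau>' and mm="of_nat m1", OF assms(1,2) Q T\<phi>, of z1 z2]
    and A' = transform_second_partial[where \<phi>=\<phi> and \<tau>=\<tau> and \<tau>'=\<tau>' and mm="of_nat m1", OF assms(1,2) Q T\<phi>, of z1 z2]
  note B = transform_first_partials[where \<phi>=\<psi> and \<tau>=\<tau> and \<tau>'=\<tau>' and mm="of_nat m2", OF assms(3,4) Q T\<psi>, of z1 z2]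
    and B' = transform_second_partial[where \<phi>=\<psi> and \<tau>=\<tau> and \<tau>'=\<tau>' and mm="of_nat m2", OF assms(3,4) Q T\<psi>, of z1 z2]
  have solve1: "X = Y * inverse p" if "p \<noteq> 0" "X * p = Y" for X Y p :: complex
    using that by (simp add: field_simps)
  have solve2: "X = Y * (inverse p)\<^sup>2" if "p \<noteq> 0" "X * p * p = Y" for X Y p :: complex
    using that by (simp add: field_simps power2_eq_square)
  have exp_sum: "exp (of_nat m1 * Q z1 z2) * exp (of_nat m2 * Q z1 z2) = exp (of_nat (m1 + m2) * Q z1 z2)"
    by (simp add: distrib_right exp_add)
  have factor_z2: "C1 * exp (of_nat m1 * Q z1 z2) * (C2 * exp (of_nat m2 * Q z1 z2)) * inverse p2
                  = C1 * C2 / p2 * exp (of_nat (m1 + m2) * Q z1 z2)"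
    unfolding exp_sum[symmetric] by (simp add: divide_inverse mult_ac)
  have factor_z1: "(C1 * exp (of_nat m1 * Q z1 z2) * (C2 * exp (of_nat m2 * Q z1 z2)) * inverse p1)\<^sup>2
                  = (C1 * C2 / p1)\<^sup>2 * exp (of_nat (2 * (m1 + m2)) * Q z1 z2)"
  proof -
    have "exp (of_nat (2 * (m1 + m2)) * Q z1 z2) = (exp (of_nat (m1 + m2) * Q z1 z2))\<^sup>2"
      unfolding exp_of_nat_mult by (simp add: power_mult[symmetric] mult.commute)
    then show ?thesis
      unfolding exp_sum[symmetric] by (simp add: divide_inverse power_mult_distrib mult_ac)
  qed
  show "bracket_z2 m1 m2 \<phi> \<psi> \<tau>' (p1 * z1 + q1) (p2 * z2 + q2)
           = C1 * C2 / p2 * exp (of_nat (m1 + m2) * Q z1 z2) * bracket_z2 m1 m2 \<phi> \<psi> \<tau> z1 z2"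
    unfolding bracket_z2_def factor_z2[symmetric]
    by (rule bracket_z2_cancellation[OF T\<phi> T\<psi> solve1[OF p(2) A(1)] solve1[OF p(2) B(1)]])
  show "bracket_z1 m1 m2 \<phi> \<psi> \<tau>' (p1 * z1 + q1) (p2 * z2 + q2)
           = (C1 * C2 / p1)\<^sup>2 * exp (of_nat (2 * (m1 + m2)) * Q z1 z2) * bracket_z1 m1 m2 \<phi> \<psi> \<tau> z1 z2"
    unfolding bracket_z1_def factor_z1[symmetric]
    by (rule bracket_z1_cancellation[OF T\<phi> T\<psi> solve1[OF p(1) A(2)] solve1[OF p(1) B(2)]
          solve2[OF p(1) A'] solve2[OF p(1) B']])
qed

section \<open>The slash and Heisenberg actions\<close>

text \<open>Both actions have the shape A exp (-m Q) \<phi>(\<tau>', p1 z1 + q1, p2 z2 + q2); invariance is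
  equivalent to a transformation law as above.\<close>
lemma invariance_to_transform:
  fixes v w A E :: complex
  assumes "v = A * exp (- E) * w" "A \<noteq> 0"
  shows "w = inverse A * exp E * v"
proof -
  have "inverse A * exp E * v = (inverse A * A) * (exp E * exp (- E)) * w"
    unfolding assms(1) by (simp only: mult_ac)
  then show ?thesis using assms(2) by (simp add: exp_minus_inverse)
qed

lemma transform_to_invariance:
  fixes v w A C E :: complex
  assumes "w = C * exp E * v" "A * C = 1"
  shows "A * exp (- E) * w = v"
proof -
  have "A * exp (- E) * w = (A * C) * (exp E * exp (- E)) * v"
    unfolding assms(1) by (simp only: mult_ac)
  then show ?thesis unfolding assms(2) exp_minus_inverse by simp
qed

lemma gauss_unit_facts:
  assumes "\<epsilon> \<in> gauss_units"
  shows "\<epsilon> \<noteq> 0" "\<epsilon> * cnj \<epsilon> = 1" "\<epsilon> ^ 4 = 1"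
  using assms unfolding gauss_units_def by (auto simp: power4_eq_xxxx)

lemma moebius_upper_half_plane:
  fixes a b c d :: int
  assumes det: "a * d - b * c = 1" and tau: "Im \<tau> > 0"
  shows "of_int c * \<tau> + of_int d \<noteq> 0"
    and "Im ((of_int a * \<tau> + of_int b) / (of_int c * \<tau> + of_int d)) > 0"
proof -
  show J: "of_int c * \<tau> + of_int d \<noteq> 0"
  proof
    assume J0: "of_int c * \<tau> + of_int d = 0"
    then have "Im (of_int c * \<tau> + of_int d) = 0" by simp
    then have "of_int c * Im \<tau> = 0" by simp
    then have "c = 0" using tau by simp
    with J0 have "d = 0" by simp
    with \<open>c = 0\<close> det show False by simp
  qed
  have "Im ((of_int a * \<tau> + of_int b) / (of_int c * \<tau> + of_int d))
          = of_int (a * d - b * c) * Im \<tau> / (cmod (of_int c * \<tau> + of_int d))\<^sup>2"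
    by (simp add: Im_divide cmod_power2 algebra_simps)
  then show "Im ((of_int a * \<tau> + of_int b) / (of_int c * \<tau> + of_int d)) > 0"
    using J tau det by simp
qed

lemma slash_unfold:
  fixes a b c d :: int
  assumes "J = of_int c * \<tau> + of_int d" "\<tau>' = (of_int a * \<tau> + of_int b) / J"
    and "\<And>z1 z2. Q z1 z2 = 2 * of_real pi * \<i> * of_int c / J * z1 * z2"
  shows "slash k m \<epsilon> a b c d f \<tau> z1 z2
           = inverse (\<epsilon> ^ k) * inverse (J ^ k) * exp (- (of_nat m * Q z1 z2))
             * f \<tau>' (\<epsilon> / J * z1 + 0) (cnj \<epsilon> / J * z2 + 0)"
  unfolding slash_def assms(1)[symmetric] assms(2,3) by (simp add: mult_ac)

text \<open>The weight factors match: the scalars produced by bracket_transform are those of the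
  slash action of weight k1 + k2 + 1, resp. 2 (k1 + k2 + 1).\<close>
lemma weight_factor_z2:
  fixes \<epsilon> J :: complex
  assumes "\<epsilon> * cnj \<epsilon> = 1" "J \<noteq> 0"
  shows "inverse (\<epsilon> ^ (k1 + k2 + 1)) * inverse (J ^ (k1 + k2 + 1))
           * (\<epsilon> ^ k1 * J ^ k1 * (\<epsilon> ^ k2 * J ^ k2) / (cnj \<epsilon> / J)) = 1"
proof -
  have "\<epsilon> \<noteq> 0" using assms(1) by auto
  then have "cnj \<epsilon> = inverse \<epsilon>" using assms(1) by (simp add: field_simps)
  with \<open>\<epsilon> \<noteq> 0\<close> show ?thesis using assms(2) by (simp add: power_add field_simps)
qed

lemma weight_factor_z1:
  fixes \<epsilon> J :: complex
  assumes "\<epsilon> ^ 4 = 1" "J \<noteq> 0"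
  shows "inverse (\<epsilon> ^ (2 * (k1 + k2 + 1))) * inverse (J ^ (2 * (k1 + k2 + 1)))
           * (\<epsilon> ^ k1 * J ^ k1 * (\<epsilon> ^ k2 * J ^ k2) / (\<epsilon> / J))\<^sup>2 = 1"
proof -
  have "\<epsilon> \<noteq> 0" using assms(1) by auto
  have sq: "x ^ (2 * n) = (x ^ n)\<^sup>2" for x :: complex and n by (simp add: power_mult[symmetric] mult.commute)
  have "(\<epsilon> ^ k1 * J ^ k1 * (\<epsilon> ^ k2 * J ^ k2) / (\<epsilon> / J))\<^sup>2
          = (\<epsilon> ^ (k1 + k2 + 1) * J ^ (k1 + k2 + 1))\<^sup>2 * inverse (\<epsilon> ^ 4)"
    using \<open>\<epsilon> \<noteq> 0\<close> by (simp add: power_add field_simps power2_eq_square power4_eq_xxxx)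
  then show ?thesis
    unfolding sq using assms \<open>\<epsilon> \<noteq> 0\<close> by (simp add: field_simps power_mult_distrib)
qed

lemma slash_invariance_brackets:
  fixes \<phi> \<psi> :: "complex \<Rightarrow> complex \<Rightarrow> complex \<Rightarrow> complex" and a b c d :: int and k1 k2 m1 m2 :: nat
  assumes \<epsilon>: "\<epsilon> \<in> gauss_units" and det: "a * d - b * c = 1" and tau: "Im \<tau> > 0"
    and D\<phi>: "\<And>t. Im t > 0 \<Longrightarrow> z_derivs \<phi> t" and D\<psi>: "\<And>t. Im t > 0 \<Longrightarrow> z_derivs \<psi> t"
    and S\<phi>: "\<And>z1 z2. slash k1 m1 \<epsilon> a b c d \<phi> \<tau> z1 z2 = \<phi> \<tau> z1 z2"
    and S\<psi>: "\<And>z1 z2. slash k2 m2 \<epsilon> a b c d \<psi> \<tau> z1 z2 = \<psi> \<tau> z1 z2"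
  shows "slash (k1 + k2 + 1) (m1 + m2) \<epsilon> a b c d (bracket_z2 m1 m2 \<phi> \<psi>) \<tau> z1 z2
           = bracket_z2 m1 m2 \<phi> \<psi> \<tau> z1 z2"
    and "slash (2 * (k1 + k2 + 1)) (2 * (m1 + m2)) \<epsilon> a b c d (bracket_z1 m1 m2 \<phi> \<psi>) \<tau> z1 z2
           = bracket_z1 m1 m2 \<phi> \<psi> \<tau> z1 z2"
proof -
  define J where "J = of_int c * \<tau> + of_int d"
  define \<tau>' where "\<tau>' = (of_int a * \<tau> + of_int b) / J"
  define Q where "Q z1 z2 = 2 * of_real pi * \<i> * of_int c / J * z1 * z2" for z1 z2
  note unfold = slash_unfold[OF J_def \<tau>'_def Q_def]
  have J: "J \<noteq> 0" and tau': "Im \<tau>' > 0"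
    using moebius_upper_half_plane[OF det tau] unfolding J_def \<tau>'_def by auto
  note unit = gauss_unit_facts[OF \<epsilon>]
  have transform: "f \<tau>' (\<epsilon> / J * z1 + 0) (cnj \<epsilon> / J * z2 + 0)
                     = \<epsilon> ^ k * J ^ k * exp (of_nat m * Q z1 z2) * f \<tau> z1 z2"
    if "\<And>z1 z2. slash k m \<epsilon> a b c d f \<tau> z1 z2 = f \<tau> z1 z2" for f k m z1 z2
  proof -
    have "f \<tau> z1 z2 = inverse (\<epsilon> ^ k) * inverse (J ^ k) * exp (- (of_nat m * Q z1 z2))
                        * f \<tau>' (\<epsilon> / J * z1 + 0) (cnj \<epsilon> / J * z2 + 0)"
      using that[of z1 z2] unfolding unfold by simp
    from invariance_to_transform[OF this] show ?thesis using unit(1) J by simp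
  qed
  have Q_form: "Q z1 z2 = 0 + 0 * z1 + 0 * z2 + 2 * of_real pi * \<i> * of_int c / J * z1 * z2" for z1 z2
    unfolding Q_def by simp
  have p: "\<epsilon> / J \<noteq> 0" "cnj \<epsilon> / J \<noteq> 0" using unit(1) J by auto
  note brackets = bracket_transform[where \<phi>=\<phi> and \<psi>=\<psi> and \<tau>=\<tau> and \<tau>'=\<tau>' and Q=Q,
      OF D\<phi>[OF tau] D\<phi>[OF tau'] D\<psi>[OF tau] D\<psi>[OF tau'] Q_form transform[OF S\<phi>] transform[OF S\<psi>] p]
  show "slash (k1 + k2 + 1) (m1 + m2) \<epsilon> a b c d (bracket_z2 m1 m2 \<phi> \<psi>) \<tau> z1 z2
           = bracket_z2 m1 m2 \<phi> \<psi> \<tau> z1 z2"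
    unfolding unfold
    by (rule transform_to_invariance[OF brackets(1)]) (rule weight_factor_z2[OF unit(2) J])
  show "slash (2 * (k1 + k2 + 1)) (2 * (m1 + m2)) \<epsilon> a b c d (bracket_z1 m1 m2 \<phi> \<psi>) \<tau> z1 z2
           = bracket_z1 m1 m2 \<phi> \<psi> \<tau> z1 z2"
    unfolding unfold
    by (rule transform_to_invariance[OF brackets(2)]) (rule weight_factor_z1[OF unit(3) J])
qed

lemma heis_unfold:
  assumes "\<And>z1 z2. Q z1 z2 = - (2 * of_real pi * \<i> * (normK l * \<tau> + cnj l * z1 + l * z2))"
  shows "heis m l \<mu> f \<tau> z1 z2
           = 1 * exp (- (of_nat m * Q z1 z2)) * f \<tau> (1 * z1 + (l * \<tau> + \<mu>)) (1 * z2 + (cnj l * \<tau> + cnj \<mu>))"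
  unfolding heis_def assms by (simp add: add.assoc mult_ac)

lemma heisenberg_invariance_brackets:
  fixes \<phi> \<psi> :: "complex \<Rightarrow> complex \<Rightarrow> complex \<Rightarrow> complex" and m1 m2 :: nat
  assumes D\<phi>: "z_derivs \<phi> \<tau>" and D\<psi>: "z_derivs \<psi> \<tau>"
    and H\<phi>: "\<And>z1 z2. heis m1 l \<mu> \<phi> \<tau> z1 z2 = \<phi> \<tau> z1 z2"
    and H\<psi>: "\<And>z1 z2. heis m2 l \<mu> \<psi> \<tau> z1 z2 = \<psi> \<tau> z1 z2"
  shows "heis (m1 + m2) l \<mu> (bracket_z2 m1 m2 \<phi> \<psi>) \<tau> z1 z2 = bracket_z2 m1 m2 \<phi> \<psi> \<tau> z1 z2"
    and "heis (2 * (m1 + m2)) l \<mu> (bracket_z1 m1 m2 \<phi> \<psi>) \<tau> z1 z2 = bracket_z1 m1 m2 \<phi> \<psi> \<tau> z1 z2"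
proof -
  define Q where "Q z1 z2 = - (2 * of_real pi * \<i> * (normK l * \<tau> + cnj l * z1 + l * z2))" for z1 z2
  note unfold = heis_unfold[OF Q_def]
  have transform: "f \<tau> (1 * z1 + (l * \<tau> + \<mu>)) (1 * z2 + (cnj l * \<tau> + cnj \<mu>))
                     = 1 * exp (of_nat m * Q z1 z2) * f \<tau> z1 z2"
    if "\<And>z1 z2. heis m l \<mu> f \<tau> z1 z2 = f \<tau> z1 z2" for f m z1 z2
  proof -
    have "f \<tau> (1 * z1 + (l * \<tau> + \<mu>)) (1 * z2 + (cnj l * \<tau> + cnj \<mu>))
            = inverse 1 * exp (of_nat m * Q z1 z2) * f \<tau> z1 z2"
      by (rule invariance_to_transform) (use that[of z1 z2] in \<open>simp_all add: unfold\<close>)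
    then show ?thesis by simp
  qed
  have Q_form: "Q z1 z2 = - (2 * of_real pi * \<i> * normK l * \<tau>) + - (2 * of_real pi * \<i> * cnj l) * z1
                  + - (2 * of_real pi * \<i> * l) * z2 + 0 * z1 * z2" for z1 z2
    unfolding Q_def by (simp add: algebra_simps)
  note brackets = bracket_transform[where \<phi>=\<phi> and \<psi>=\<psi> and \<tau>=\<tau> and \<tau>'=\<tau> and Q=Q,
      OF D\<phi> D\<phi> D\<psi> D\<psi> Q_form transform[OF H\<phi>] transform[OF H\<psi>] one_neq_zero one_neq_zero]
  show "heis (m1 + m2) l \<mu> (bracket_z2 m1 m2 \<phi> \<psi>) \<tau> z1 z2 = bracket_z2 m1 m2 \<phi> \<psi> \<tau> z1 z2"
    unfolding unfold by (rule transform_to_invariance[OF brackets(1)]) simp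
  show "heis (2 * (m1 + m2)) l \<mu> (bracket_z1 m1 m2 \<phi> \<psi>) \<tau> z1 z2 = bracket_z1 m1 m2 \<phi> \<psi> \<tau> z1 z2"
    unfolding unfold by (rule transform_to_invariance[OF brackets(2)]) simp
qed

text \<open>Holomorphy is automatic for functions given by such Fourier series.\<close>
lemma HJF_iff_jacobi_fourier:
  "HJF k m f \<longleftrightarrow>
     jacobi_fourier m f
   \<and> (\<forall>\<epsilon>\<in>gauss_units. \<forall>a b c d. a * d - b * c = 1 \<longrightarrow>
        (\<forall>\<tau> z1 z2. Im \<tau> > 0 \<longrightarrow> slash k m \<epsilon> a b c d f \<tau> z1 z2 = f \<tau> z1 z2))
   \<and> (\<forall>l\<in>gauss_ints. \<forall>\<mu>\<in>gauss_ints.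
        (\<forall>\<tau> z1 z2. Im \<tau> > 0 \<longrightarrow> heis m l \<mu> f \<tau> z1 z2 = f \<tau> z1 z2))"
proof -
  have "jacobi_fourier m f \<longleftrightarrow> (\<exists>cf :: nat \<Rightarrow> complex \<Rightarrow> complex. \<forall>\<tau> z1 z2. Im \<tau> > 0 \<longrightarrow>
          ((\<lambda>(n, r). cf n r * ee (of_nat n * \<tau> + r * z1 + cnj r * z2)) has_sum f \<tau> z1 z2)
            {(n, r). r \<in> gauss_dual \<and> (cmod r)\<^sup>2 \<le> real (n * m)})"
    unfolding jacobi_fourier_def fourier_term_def jacobi_support_def ..
  then show ?thesis
    unfolding HJF_def using jacobi_fourier_holo3 by blast
qed

theorem proposition4p8:
  fixes \<phi> \<psi> :: "complex \<Rightarrow> complex \<Rightarrow> complex \<Rightarrow> complex" and k1 k2 m1 m2 :: nat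
  assumes "k1 > 0" "m1 > 0" "k2 > 0" "m2 > 0"
    and "HJF k1 m1 \<phi>" and "HJF k2 m2 \<psi>"
  shows "HJF (k1 + k2 + 1) (m1 + m2)
           (\<lambda>\<tau> z1 z2. of_nat m1 * \<phi> \<tau> z1 z2 * pd2 \<psi> \<tau> z1 z2
                     - of_nat m2 * \<psi> \<tau> z1 z2 * pd2 \<phi> \<tau> z1 z2)
       \<and> HJF (2 * (k1 + k2 + 1)) (2 * (m1 + m2))
           (\<lambda>\<tau> z1 z2.
              (of_nat m1 * \<phi> \<tau> z1 z2 * pd1 \<psi> \<tau> z1 z2 - of_nat m2 * \<psi> \<tau> z1 z2 * pd1 \<phi> \<tau> z1 z2)\<^sup>2
            + of_nat m1 * (\<phi> \<tau> z1 z2)\<^sup>2 * ((pd1 \<psi> \<tau> z1 z2)\<^sup>2 - \<psi> \<tau> z1 z2 * pd1 (pd1 \<psi>) \<tau> z1 z2)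
            + of_nat m2 * (\<psi> \<tau> z1 z2)\<^sup>2 * ((pd1 \<phi> \<tau> z1 z2)\<^sup>2 - \<phi> \<tau> z1 z2 * pd1 (pd1 \<phi>) \<tau> z1 z2))"
proof -
  have \<phi>: "jacobi_fourier m1 \<phi>" and \<psi>: "jacobi_fourier m2 \<psi>"
    using assms(5,6) by (simp_all add: HJF_iff_jacobi_fourier)
  have D\<phi>: "z_derivs \<phi> t" and D\<psi>: "z_derivs \<psi> t" if "Im t > 0" for t
    using jacobi_fourier_z_derivs[OF \<phi> that] jacobi_fourier_z_derivs[OF \<psi> that] .
  have "HJF (k1 + k2 + 1) (m1 + m2) (bracket_z2 m1 m2 \<phi> \<psi>)"
    using jacobi_fourier_bracket_z2[OF \<phi> \<psi>] assms(5,6)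
      slash_invariance_brackets(1)[OF _ _ _ D\<phi> D\<psi>] heisenberg_invariance_brackets(1)[OF D\<phi> D\<psi>]
    unfolding HJF_iff_jacobi_fourier by auto
  moreover have "HJF (2 * (k1 + k2 + 1)) (2 * (m1 + m2)) (bracket_z1 m1 m2 \<phi> \<psi>)"
    using jacobi_fourier_bracket_z1[OF \<phi> \<psi>] assms(5,6)
      slash_invariance_brackets(2)[OF _ _ _ D\<phi> D\<psi>] heisenberg_invariance_brackets(2)[OF D\<phi> D\<psi>]
    unfolding HJF_iff_jacobi_fourier by auto
  ultimately show ?thesis unfolding bracket_z2_def bracket_z1_def by blast
qed

end
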